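(* Let $U:\mathbb{R}^p\times\mathbb{R}^m\to\mathbb{R}$ be $C^2$, $f_1=-\partial_xU$, $f_2=-\partial_yU$, and $g:\mathbb{R}^m\to\mathbb{R}^m$; assume $f_1,f_2,\nabla g$ are $C^1$ with bounded derivatives. For $\omega>0$ let $(x^\omega,y^\omega)$ solve $$\ddot x^\omega=f_1(x^\omega,y^\omega),\qquad \ddot y^\omega=f_2(x^\omega,y^\omega)-\omega^2 g(y^\omega)^T\nabla g(y^\omega),$$ with $\omega$-independent initial data $x^\omega(0)=x_0$, $\dot x^\omega(0)=\dot x_0$, $y^\omega(0)=y_0$, $\dot y^\omega(0)=\dot y_0$, where $g(y_0)=0$ and $\nabla g(y_0)\dot y_0=0$. Assume $x^\omega,y^\omega$ are bounded uniformly in $\omega$ and time, and that $\nabla g$ is nonsingular in a neighborhood of $y_0$. Then for every $t\ge0$ the limit $$\lambda(t):=-\lim_{T\to0}\lim_{\omega\to\infty}\frac1T\int_t^{t+T}\omega^2g(y^\omega(s))\,ds$$ exists and is finite. Moreover, letting $(x,y)$ be the solution of $\ddot x=f_1(x,y)$, $\ddot y=f_2(x,y)+\lambda^T\nabla g(y)$ with the same initial data $x_0,\dot x_0,y_0,\dot y_0$, one has, as $\omega\to\infty$: $x^\omega(t)\to x(t)$ for every $t\ge0$; $y^\omega$ two-scale flow converges to $y$; and $g(y^\omega(t))\to0$ for every $t\ge0$.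
   Context: $\nabla g(y)$ denotes the $m\times m$ Jacobian of $g$ at $y$. Two-scale flow convergence of $y^\omega$ to $y$ means: for every $t\ge0$ and every bounded, uniformly Lipschitz continuous $\varphi:\mathbb{R}^m\to\mathbb{R}$, $\lim_{T\to0}\lim_{\omega\to\infty}\frac1T\int_t^{t+T}\big(\varphi(y^\omega(s))-\varphi(y(s))\big)ds=0$. *)

theory Defs
  imports "HOL-Analysis.Analysis"
begin

definition C1_bdd_deriv :: "('a::real_normed_vector \<Rightarrow> 'b::real_normed_vector) \<Rightarrow> bool" where
  "C1_bdd_deriv F \<longleftrightarrow> (\<exists>F' :: 'a \<Rightarrow> ('a \<Rightarrow>\<^sub>L 'b).
      (\<forall>z. (F has_derivative blinfun_apply (F' z)) (at z)) \<and>
      continuous_on UNIV F' \<and> bounded (range F'))"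

definition iter_lim :: "(real \<Rightarrow> real \<Rightarrow> 'a::real_normed_vector) \<Rightarrow> 'a \<Rightarrow> bool" where
  "iter_lim A l \<longleftrightarrow> (\<exists>L. (\<forall>\<^sub>F T in at_right 0. ((\<lambda>\<omega>. A \<omega> T) \<longlongrightarrow> L T) at_top)
                         \<and> (L \<longlongrightarrow> l) (at_right 0))"

definition solves2 :: "(real \<Rightarrow> 'a::real_normed_vector) \<Rightarrow> (real \<Rightarrow> 'a) \<Rightarrow> 'a \<Rightarrow> 'a \<Rightarrow> bool" where
  "solves2 z F z0 z1 \<longleftrightarrow> (\<exists>z'. (\<forall>t\<ge>0. (z has_vector_derivative z' t) (at t within {0..}) \<and>
                                      (z' has_vector_derivative F t) (at t within {0..}))
                              \<and> z 0 = z0 \<and> z' 0 = z1)"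

definition two_scale_flow_conv :: "(real \<Rightarrow> real \<Rightarrow> 'a::real_normed_vector) \<Rightarrow> (real \<Rightarrow> 'a) \<Rightarrow> bool" where
  "two_scale_flow_conv yw y \<longleftrightarrow>
     (\<forall>t\<ge>0. \<forall>\<phi> :: 'a \<Rightarrow> real. bounded (range \<phi>) \<and> (\<exists>C. C-lipschitz_on UNIV \<phi>) \<longrightarrow>
        iter_lim (\<lambda>\<omega> T. (1 / T) * integral {t..t+T} (\<lambda>s. \<phi> (yw \<omega> s) - \<phi> (y s))) 0)"

end

theory Submission
  imports Defs
begin

text \<open>
  Here g maps R^m to R^m and Dg y0 is invertible, so y0 is an isolated zero of g and the
  constraint g(y) = 0 pins y to y0 near the initial point.

  Proof idea.  (1) Energy conservation bounds |g(yw)| by O(1/omega) uniformly in time;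
  a quadratic Taylor estimate of g at y0 turns this into |yw - y0| <= R/omega.
  (2) The slow components therefore feel O(1/omega)-close forces; a Gronwall estimate
  shows they are Cauchy in omega and converge, with their velocities and uniformly on
  bounded intervals, to a solution x_lim of xdd = f1(x, y0).  (3) Comparing the energy of
  the penalized motion with that of the limit motion, the energy of the fast oscillation
  |yd|^2 + omega^2 |g|^2 is O(1/omega).  (4) Integrating the y-equation over [t, t+T]
  then shows that the averaged penalty force omega^2 g(yw) tends to
  -lam t = f2(x_lim t, y0) Dg(y0)^-1, and averaging as T -> 0+ gives the multiplier.
  (5) (x_lim, y0) solves the limit system, and a second Gronwall argument shows it is
  its only solution; the convergence statements follow from (1) and (2).
\<close>

lemma mat_vec_norm:
  fixes A :: "real^'n^'m"
  shows "norm (A *v x) \<le> norm A * norm x"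
proof -
  have "norm (A *v x) ^ 2 = (\<Sum>i\<in>UNIV. ((A *v x) $ i)^2)"
    unfolding power2_norm_eq_inner inner_vec_def by (simp add: power2_eq_square)
  also have "\<dots> = (\<Sum>i\<in>UNIV. (inner (A $ i) x)^2)"
    by (simp add: matrix_vector_mult_def inner_vec_def)
  also have "\<dots> \<le> (\<Sum>i\<in>UNIV. (norm (A $ i))^2 * (norm x)^2)"
  proof (rule sum_mono)
    fix i
    have "\<bar>inner (A $ i) x\<bar> \<le> norm (A $ i) * norm x" by (rule Cauchy_Schwarz_ineq2)
    then have "\<bar>inner (A $ i) x\<bar>^2 \<le> (norm (A $ i) * norm x)^2"
      by (rule power_mono) simp
    then show "(inner (A $ i) x)^2 \<le> (norm (A $ i))^2 * (norm x)^2"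
      by (simp add: power_mult_distrib)
  qed
  also have "\<dots> = (norm A)^2 * (norm x)^2"
  proof -
    have "(norm A)^2 = (\<Sum>i\<in>UNIV. (norm (A $ i))^2)"
      by (simp add: norm_vec_def L2_set_def sum_nonneg)
    then show ?thesis by (simp add: sum_distrib_right)
  qed
  finally have "norm (A *v x) ^ 2 \<le> (norm A * norm x)^2" by (simp add: power_mult_distrib)
  then show ?thesis by (rule power2_le_imp_le) simp
qed

text \<open>The same bound for matrices acting on row vectors (the form in which the penalty
  force g(y)^T Dg(y) appears).\<close>
lemma vec_mat_norm:
  fixes A :: "real^'n^'m"
  shows "norm (x v* A) \<le> norm x * norm A"
proof -
  have "norm (x v* A) ^ 2 = inner x (A *v (x v* A))"
    by (simp add: dot_lmul_matrix[symmetric] power2_norm_eq_inner)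
  also have "\<dots> \<le> norm x * norm (A *v (x v* A))"
    using Cauchy_Schwarz_ineq2 abs_le_D1 by blast
  also have "\<dots> \<le> norm x * (norm A * norm (x v* A))"
    by (simp add: mat_vec_norm mult_left_mono)
  finally have le: "norm (x v* A) * norm (x v* A) \<le> (norm x * norm A) * norm (x v* A)"
    by (simp add: power2_eq_square algebra_simps)
  then show ?thesis
  proof (cases "norm (x v* A) = 0")
    case True then show ?thesis by simp
  next
    case False then have "norm (x v* A) > 0" by simp
    then show ?thesis using le mult_le_cancel_right_pos by blast
  qed
qed

lemma neg_vm: "(- u) v* B = - (u v* (B::real^'n^'m))"
  by (simp add: vector_matrix_mult_def vec_eq_iff sum_negf)

lemma C1_bdd_deriv_lipschitz:
  assumes "C1_bdd_deriv F"
  shows "\<exists>L>0. \<forall>a b. norm (F a - F b) \<le> L * norm (a - b)"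
proof -
  obtain F' where der: "\<And>z. (F has_derivative blinfun_apply (F' z)) (at z)"
    and bd: "bounded (range F')"
    using assms unfolding C1_bdd_deriv_def by blast
  obtain B where B: "\<And>z. norm (F' z) \<le> B"
    using bd unfolding bounded_iff by auto
  have "norm (F a - F b) \<le> (\<bar>B\<bar> + 1) * norm (a - b)" for a b
  proof (rule differentiable_bound[where S=UNIV and f'="\<lambda>z. blinfun_apply (F' z)"])
    show "convex (UNIV::'a set)" by simp
    show "(F has_derivative blinfun_apply (F' x)) (at x within UNIV)" for x using der by simp
    show "onorm (blinfun_apply (F' x)) \<le> \<bar>B\<bar> + 1" for x
      using B[of x] by (simp add: norm_blinfun.rep_eq[symmetric])
  qed auto
  then show ?thesis by (intro exI[of _ "\<bar>B\<bar> + 1"]) auto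
qed

lemma lipschitz_growth:
  fixes F :: "'a::real_normed_vector \<Rightarrow> 'b::real_normed_vector"
  assumes "\<And>a b. norm (F a - F b) \<le> L * norm (a - b)"
  shows "norm (F z) \<le> norm (F 0) + L * norm z"
  using norm_triangle_sub[of "F z" "F 0"] assms[of z 0] by simp

lemma lipschitz_pair:
  fixes F :: "'a::real_normed_vector \<times> 'b::real_normed_vector \<Rightarrow> 'c::real_normed_vector"
  assumes "\<And>z w. norm (F z - F w) \<le> L * norm (z - w)" and "L \<ge> 0"
  shows "norm (F (a, b) - F (c, d)) \<le> L * (norm (a - c) + norm (b - d))"
proof -
  have "norm (F (a, b) - F (c, d)) \<le> L * norm ((a, b) - (c, d))" by (rule assms(1))
  also have "\<dots> \<le> L * (norm (a - c) + norm (b - d))"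
    using assms(2) norm_Pair_le[of "a - c" "b - d"] by (intro mult_left_mono) auto
  finally show ?thesis .
qed

lemma zero_deriv_const_atLeast:
  fixes E :: "real \<Rightarrow> real"
  assumes "\<And>s. s \<ge> 0 \<Longrightarrow> (E has_real_derivative 0) (at s within {0..})" "t \<ge> 0"
  shows "E t = E 0"
proof -
  have "\<And>s. s \<in> {0..} \<Longrightarrow> (E has_derivative (\<lambda>h. 0)) (at s within {0..})"
  proof -
    fix s :: real assume "s \<in> {0..}"
    then have "(E has_derivative (*) 0) (at s within {0..})"
      using assms(1)[of s] by (simp add: has_field_derivative_def)
    moreover have "((*) (0::real)) = (\<lambda>h. 0)" by auto
    ultimately show "(E has_derivative (\<lambda>h. 0)) (at s within {0..})" by simp
  qed
  from has_derivative_zero_unique[OF convex_real_interval(1) this, of t 0] assms(2)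
  show ?thesis by simp
qed

lemma continuous_on_atLeast_of_deriv:
  assumes "\<And>s. s \<ge> 0 \<Longrightarrow> (f has_vector_derivative f' s) (at s within {0..})"
  shows "continuous_on {0..} f"
  using assms unfolding has_vector_derivative_def by (intro has_derivative_continuous_on) auto

lemma at_within_Icc_to_atLeast:
  assumes "(f has_vector_derivative f') (at s within {0..s+1})" "s \<ge> 0"
  shows "(f has_vector_derivative f') (at s within {0..})"
proof -
  have "at s within {0..s+1} = at s within {0..}"
    by (rule at_within_nhd[of s "{..<s+1}"]) (use assms(2) in auto)
  then show ?thesis using assms(1) by simp
qed

lemma inner_self_deriv:
  assumes "(f has_vector_derivative f') (at t within S)"
  shows "((\<lambda>s. f s \<bullet> f s) has_real_derivative 2 * (f t \<bullet> f')) (at t within S)"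
proof -
  have "((\<lambda>s. f s \<bullet> f s) has_derivative (\<lambda>h. f t \<bullet> (h *\<^sub>R f') + (h *\<^sub>R f') \<bullet> f t)) (at t within S)"
    using has_derivative_inner[OF assms[unfolded has_vector_derivative_def] assms[unfolded has_vector_derivative_def]] .
  moreover have "(\<lambda>h. f t \<bullet> (h *\<^sub>R f') + (h *\<^sub>R f') \<bullet> f t) = (*) (2 * (f t \<bullet> f'))"
    by (auto simp: inner_commute algebra_simps)
  ultimately show ?thesis by (simp add: has_field_derivative_def)
qed

text \<open>Gronwall inequality in differential form: phi' <= C phi + b on [0, T] gives
  phi T <= (phi 0 + b T) exp (C T).  Proved by the mean value theorem applied to
  exp (-C s) phi s - b s.\<close>
lemma gronwall_linear:
  fixes \<phi> \<phi>' :: "real \<Rightarrow> real"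
  assumes T: "0 \<le> T"
    and der: "\<And>s. s \<in> {0..T} \<Longrightarrow> (\<phi> has_real_derivative \<phi>' s) (at s within {0..T})"
    and bd: "\<And>s. s \<in> {0..T} \<Longrightarrow> \<phi>' s \<le> C * \<phi> s + b"
    and C: "0 \<le> C" and b: "0 \<le> b"
  shows "\<phi> T \<le> (\<phi> 0 + b * T) * exp (C*T)"
proof (cases "T = 0")
  case True then show ?thesis by simp
next
  case False
  then have T0: "0 < T" using T by simp
  define psi where "psi s = exp (- C * s) * \<phi> s - b * s" for s
  define psi' where "psi' s = exp (- C * s) * \<phi>' s - C * exp (- C * s) * \<phi> s - b" for s
  have dpsi: "(psi has_real_derivative psi' s) (at s within {0..T})" if "s \<in> {0..T}" for s
    unfolding psi_def psi'_def
    by (rule derivative_eq_intros der[OF that] refl | simp add: algebra_simps)+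
  have neg: "psi' s \<le> 0" if "s \<in> {0..T}" for s
  proof -
    have e: "exp (- C * s) \<le> 1" using that C by auto
    have "psi' s = exp (- C * s) * (\<phi>' s - C * \<phi> s) - b" unfolding psi'_def by (simp add: algebra_simps)
    also have "\<dots> \<le> exp (- C * s) * b - b"
      using bd[OF that] by (intro diff_right_mono mult_left_mono) auto
    also have "\<dots> \<le> 0" using e b by (simp add: mult_left_le_one_le)
    finally show ?thesis .
  qed
  have cont: "continuous_on {0..T} psi"
    using dpsi by (meson DERIV_continuous continuous_on_eq_continuous_within)
  have dif: "psi differentiable (at x)" if "0 < x" "x < T" for x
    using dpsi[of x] that at_within_Icc_at[of 0 x T] by (auto simp: real_differentiable_def)
  obtain l z where z: "0 < z" "z < T" "DERIV psi z :> l" "psi T - psi 0 = (T - 0) * l"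
    using MVT[OF T0 cont dif] by blast
  have "DERIV psi z :> psi' z" using dpsi[of z] z at_within_Icc_at[of 0 z T] by auto
  then have "l = psi' z" using z(3) DERIV_unique by blast
  then have "l \<le> 0" using neg[of z] z by auto
  then have "T * l \<le> 0" using T0 by (simp add: mult_nonneg_nonpos)
  then have "psi T \<le> psi 0" using z(4) by simp
  then have "exp (- C * T) * \<phi> T \<le> \<phi> 0 + b * T" unfolding psi_def by simp
  then have "exp (C*T) * (exp (- C * T) * \<phi> T) \<le> exp (C*T) * (\<phi> 0 + b * T)"
    by (rule mult_left_mono) simp
  then show ?thesis by (simp add: exp_minus field_simps)
qed

text \<open>Gronwall for the squared length of a curve u in an inner product space, the form in
  which it is applied to differences of two trajectories in phase space.\<close>
lemma deviation_growth:
  fixes u u' :: "real \<Rightarrow> 'a::real_inner"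
  assumes T: "0 \<le> T"
    and der: "\<And>s. s \<in> {0..T} \<Longrightarrow> (u has_vector_derivative u' s) (at s within {0..T})"
    and growth: "\<And>s. s \<in> {0..T} \<Longrightarrow> 2 * (u s \<bullet> u' s) \<le> K * (u s \<bullet> u s) + c"
    and K: "0 \<le> K" and c: "0 \<le> c"
  shows "u T \<bullet> u T \<le> (u 0 \<bullet> u 0 + c * T) * exp (K * T)"
  by (rule gronwall_linear[OF T _ growth K c]) (rule inner_self_deriv[OF der])

text \<open>Homogeneous case: a deviation that starts at 0 and whose growth rate is controlled
  by its own size stays 0.  This gives uniqueness for the limit system.\<close>
lemma deviation_vanishes:
  fixes u u' :: "real \<Rightarrow> 'a::real_inner"
  assumes T: "0 \<le> T"
    and der: "\<And>s. s \<in> {0..T} \<Longrightarrow> (u has_vector_derivative u' s) (at s within {0..T})"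
    and growth: "\<And>s. s \<in> {0..T} \<Longrightarrow> u s \<bullet> u' s \<le> K * (u s \<bullet> u s)"
    and K: "0 \<le> K" and init: "u 0 = 0"
  shows "u T = 0"
proof -
  have "u T \<bullet> u T \<le> (u 0 \<bullet> u 0 + 0 * T) * exp ((2 * K) * T)"
    by (rule deviation_growth[OF T der]) (use growth K in auto)
  then have "u T \<bullet> u T = 0" using init inner_ge_zero[of "u T"] by simp
  then show ?thesis by simp
qed

text \<open>Elementary estimate (Young's inequality 2ab <= a^2 + b^2, applied termwise) for the
  growth of the distance of two slow trajectories.\<close>
lemma young_bound2:
  fixes a b c d e L :: real
  assumes "a \<ge> 0" "b \<ge> 0" "c \<ge> 0" "L \<ge> 0" "e \<le> L * (a + c)" "c \<le> d" "p \<le> a * b" "q \<le> b * e"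
  shows "2 * p + 2 * q \<le> (1 + 2 * L) * (a^2 + b^2) + L * d^2"
proof -
  have 1: "2*a*b \<le> a^2 + b^2" using sum_squares_bound[of a b] by (simp add: power2_eq_square)
  have "b * e \<le> b * (L * (a + c))" using assms by (intro mult_left_mono) auto
  have 2: "2*a*b*L \<le> L*(a^2 + b^2)" using mult_right_mono[OF 1 assms(4)] by (simp add: algebra_simps)
  have 3: "2*b*c \<le> b^2 + c^2" using sum_squares_bound[of b c] by (simp add: power2_eq_square)
  have 4: "2*b*c*L \<le> L*(b^2 + c^2)" using mult_right_mono[OF 3 assms(4)] by (simp add: algebra_simps)
  have "c^2 \<le> d^2" using assms(3,6) by (intro power_mono) auto
  then have 5: "L * c^2 \<le> L * d^2" using assms(4) by (intro mult_left_mono) auto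
  have "2 * p + 2 * q \<le> 2*a*b + 2*(b * (L * (a + c)))"
    using assms(7,8) \<open>b * e \<le> b * (L * (a + c))\<close> by linarith
  also have "\<dots> = 2*a*b + 2*a*b*L + 2*b*c*L" by (simp add: algebra_simps)
  also have "\<dots> \<le> (1 + 2 * L) * (a^2 + b^2) + L * d^2"
  proof -
    have "0 \<le> L * a^2" "0 \<le> L * b^2" using assms(4) by simp_all
    then show ?thesis using 1 2 4 5 by (simp add: algebra_simps)
  qed
  finally show ?thesis .
qed

lemma young_bound4:
  fixes a b c d p q r u e1 e2 L1 L2 M :: real
  assumes nn: "a \<ge> 0" "b \<ge> 0" "c \<ge> 0" "d \<ge> 0" "L1 \<ge> 0" "L2 \<ge> 0" "M \<ge> 0"
    and h: "p \<le> a * b" "q \<le> b * e1" "e1 \<le> L1 * (a + c)" "r \<le> c * d" "u \<le> d * e2"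
      "e2 \<le> L2 * (a + c) + M * c"
  shows "2 * p + 2 * q + 2 * r + 2 * u \<le> (2 + 2 * L1 + 2 * L2 + M) * (a^2 + b^2 + c^2 + d^2)"
proof -
  have sq: "2 * x * y \<le> x^2 + y^2" for x y :: real using sum_squares_bound[of x y] by (simp add: power2_eq_square)
  have q: "2 * q \<le> 2 * (L1 * (a * b)) + 2 * (L1 * (b * c))"
  proof -
    have "q \<le> b * (L1 * (a + c))" using h(2,3) nn(2) by (meson mult_left_mono order_trans)
    moreover have "b * (L1 * (a + c)) = L1 * (a * b) + L1 * (b * c)" by (simp add: algebra_simps)
    ultimately show ?thesis by linarith
  qed
  have u: "2 * u \<le> 2 * (L2 * (d * a)) + 2 * (L2 * (d * c)) + 2 * (M * (d * c))"
  proof -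
    have "u \<le> d * (L2 * (a + c) + M * c)" using h(5,6) nn(4) by (meson mult_left_mono order_trans)
    moreover have "d * (L2 * (a + c) + M * c) = L2 * (d * a) + L2 * (d * c) + M * (d * c)" by (simp add: algebra_simps)
    ultimately show ?thesis by linarith
  qed
  have i1: "2 * (L1 * (a * b)) \<le> L1 * a^2 + L1 * b^2"
    using mult_left_mono[OF sq[of a b] nn(5)] by (simp add: algebra_simps)
  have i2: "2 * (L1 * (b * c)) \<le> L1 * b^2 + L1 * c^2"
    using mult_left_mono[OF sq[of b c] nn(5)] by (simp add: algebra_simps)
  have i3: "2 * (L2 * (d * a)) \<le> L2 * d^2 + L2 * a^2"
    using mult_left_mono[OF sq[of d a] nn(6)] by (simp add: algebra_simps)
  have i4: "2 * (L2 * (d * c)) \<le> L2 * d^2 + L2 * c^2"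
    using mult_left_mono[OF sq[of d c] nn(6)] by (simp add: algebra_simps)
  have i4': "2 * (M * (d * c)) \<le> M * d^2 + M * c^2"
    using mult_left_mono[OF sq[of d c] nn(7)] by (simp add: algebra_simps)
  have i5: "2 * (a * b) \<le> a^2 + b^2" "2 * (c * d) \<le> c^2 + d^2" using sq[of a b] sq[of c d] by (simp_all add: algebra_simps)
  have pos: "0 \<le> L1 * a^2" "0 \<le> L2 * b^2" "0 \<le> L2 * a^2" "0 \<le> L1 * d^2" "0 \<le> M * a^2" "0 \<le> M * b^2"
    "0 \<le> L2 * c^2" "0 \<le> L1 * c^2" "0 \<le> a^2" "0 \<le> b^2" "0 \<le> c^2" "0 \<le> d^2" "0 \<le> L1 * b^2" "0 \<le> M * c^2"
    "0 \<le> M * d^2" "0 \<le> L2 * d^2"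
    using nn by simp_all
  have ex: "(2 + 2 * L1 + 2 * L2 + M) * (a^2 + b^2 + c^2 + d^2) = 2 * a^2 + 2 * b^2 + 2 * c^2 + 2 * d^2
     + 2 * (L1 * a^2) + 2 * (L1 * b^2) + 2 * (L1 * c^2) + 2 * (L1 * d^2)
     + 2 * (L2 * a^2) + 2 * (L2 * b^2) + 2 * (L2 * c^2) + 2 * (L2 * d^2)
     + M * a^2 + M * b^2 + M * c^2 + M * d^2"
    by (simp add: algebra_simps)
  show ?thesis unfolding ex using h(1,4) q u i1 i2 i3 i4 i4' i5 pos by linarith
qed

lemma phase_space_growth:
  fixes dx dv e1 :: "'a::real_inner" and dy dw e2 :: "'b::real_inner"
  assumes e1: "norm e1 \<le> L1 * (norm dx + norm dy)"
    and e2: "norm e2 \<le> L2 * (norm dx + norm dy) + M * norm dy"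
    and nn: "L1 \<ge> 0" "L2 \<ge> 0" "M \<ge> 0"
  shows "((dx, dv), (dy, dw)) \<bullet> ((dv, e1), (dw, e2))
       \<le> ((2 + 2 * L1 + 2 * L2 + M) / 2) * (((dx, dv), (dy, dw)) \<bullet> ((dx, dv), (dy, dw)))"
proof -
  have ip: "v \<bullet> w \<le> norm v * norm w" for v w :: "'c::real_inner"
    by (rule order_trans[OF abs_ge_self Cauchy_Schwarz_ineq2])
  have "2 * (dx \<bullet> dv) + 2 * (dv \<bullet> e1) + 2 * (dy \<bullet> dw) + 2 * (dw \<bullet> e2)
      \<le> (2 + 2 * L1 + 2 * L2 + M) * ((norm dx)^2 + (norm dv)^2 + (norm dy)^2 + (norm dw)^2)"
    by (rule young_bound4[OF _ _ _ _ nn ip ip e1 ip ip e2]) auto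
  then show ?thesis by (simp add: power2_norm_eq_inner algebra_simps)
qed

lemma tendsto_const_div_seq:
  assumes "w0 > 0"
  shows "(\<lambda>n. K / (w0 + real n)) \<longlonglongrightarrow> 0"
proof -
  have "filterlim (\<lambda>n. w0 + real n) at_top sequentially"
    by (rule filterlim_tendsto_add_at_top[OF tendsto_const filterlim_real_sequentially])
  then have "(\<lambda>n. inverse (w0 + real n)) \<longlonglongrightarrow> 0"
    using tendsto_inverse_0_at_top by blast
  then have "(\<lambda>n. K * inverse (w0 + real n)) \<longlonglongrightarrow> K * 0"
    by (intro tendsto_mult tendsto_const)
  then show ?thesis by (simp add: divide_inverse)
qed

lemma tendsto_seq_of_rate:
  fixes F :: "real \<Rightarrow> 'a::real_normed_vector"
  assumes w0: "w0 > 0" and rate: "\<And>w. w \<ge> w0 \<Longrightarrow> norm (F w - l) \<le> c / w"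
  shows "(\<lambda>n. F (w0 + real n)) \<longlonglongrightarrow> l"
proof -
  have "(\<lambda>n. F (w0 + real n) - l) \<longlonglongrightarrow> 0"
    by (rule Lim_null_comparison[OF _ tendsto_const_div_seq[OF w0, of c]]) (use rate in simp)
  then show ?thesis by (rule LIM_zero_cancel)
qed

lemma tendsto_const_div_at_top: "((\<lambda>w::real. c / w) \<longlongrightarrow> 0) at_top"
  by (rule tendsto_divide_0[OF tendsto_const filterlim_at_top_imp_at_infinity[OF filterlim_ident]])

lemma le_of_le_plus_rate:
  fixes a b c w0 :: real
  assumes "w0 > 0" "c \<ge> 0" "\<And>w. w \<ge> w0 \<Longrightarrow> a \<le> b + c / w"
  shows "a \<le> b"
proof -
  have "(\<lambda>n. b + c / (w0 + real n)) \<longlonglongrightarrow> b + 0"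
    by (intro tendsto_intros tendsto_const_div_seq assms(1))
  moreover have "\<exists>N. \<forall>n\<ge>N. a \<le> b + c / (w0 + real n)" using assms by auto
  ultimately show ?thesis using LIMSEQ_le_const[of _ "b + 0" a] by simp
qed

lemma cauchy_with_rate:
  fixes F :: "real \<Rightarrow> 'a::banach"
  assumes w0: "w0 > 0" and K: "K \<ge> 0"
    and H: "\<And>w w'. w \<ge> w0 \<Longrightarrow> w' \<ge> w0 \<Longrightarrow> norm (F w - F w') \<le> K/w + K/w'"
  shows "\<exists>l. \<forall>w\<ge>w0. norm (F w - l) \<le> K/w"
proof -
  define s where "s n = F (w0 + real n)" for n
  have lim0: "(\<lambda>n. K / (w0 + real n)) \<longlonglongrightarrow> 0" by (rule tendsto_const_div_seq[OF w0])
  have "Cauchy s"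
  proof (rule metric_CauchyI)
    fix e :: real assume e: "e > 0"
    have e2: "(0::real) < e/2" using e by simp
    have "\<forall>\<^sub>F n in sequentially. K / (w0 + real n) < e/2"
      by (rule order_tendstoD(2)[OF lim0 e2])
    then obtain M where M: "\<And>n. n \<ge> M \<Longrightarrow> K / (w0 + real n) < e/2"
      unfolding eventually_sequentially by blast
    show "\<exists>M. \<forall>m\<ge>M. \<forall>n\<ge>M. dist (s m) (s n) < e"
    proof (intro exI allI impI)
      fix m n assume "m \<ge> M" "n \<ge> M"
      have "dist (s m) (s n) \<le> K/(w0 + real m) + K/(w0 + real n)"
        unfolding s_def dist_norm using w0 by (intro H) auto
      also have "\<dots> < e"
      proof -
        have "K / (w0 + real m) < e/2" "K / (w0 + real n) < e/2"
          using M \<open>m \<ge> M\<close> \<open>n \<ge> M\<close> by blast+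
        then show ?thesis by linarith
      qed
      finally show "dist (s m) (s n) < e" .
    qed
  qed
  then obtain l where l: "s \<longlonglongrightarrow> l" using Cauchy_convergent_iff convergent_def by blast
  have "norm (F w - l) \<le> K/w" if w: "w \<ge> w0" for w
  proof -
    have a: "(\<lambda>n. norm (F w - s n)) \<longlonglongrightarrow> norm (F w - l)"
      by (intro tendsto_intros l)
    have b: "(\<lambda>n. K/w + K / (w0 + real n)) \<longlonglongrightarrow> K/w + 0"
      by (intro tendsto_intros lim0)
    have c: "\<exists>N. \<forall>n\<ge>N. norm (F w - s n) \<le> K/w + K / (w0 + real n)"
      unfolding s_def using w w0 by (intro exI[of _ 0] allI impI H) auto
    show ?thesis using LIMSEQ_le[OF a b c] by simp
  qed
  then show ?thesis by blast
qed

lemma vector_derivative_of_limit: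
  fixes F :: "nat \<Rightarrow> real \<Rightarrow> 'a::banach"
  assumes T: "T > 0"
    and dF: "\<And>n s. s \<in> {0..T} \<Longrightarrow> (F n has_vector_derivative F' n s) (at s within {0..T})"
    and lim: "\<And>s. s \<in> {0..T} \<Longrightarrow> (\<lambda>n. F n s) \<longlonglongrightarrow> G s"
    and unif: "\<And>e. e > 0 \<Longrightarrow> \<forall>\<^sub>F n in sequentially. \<forall>s\<in>{0..T}. norm (F' n s - G' s) \<le> e"
    and s: "s \<in> {0..T}"
  shows "(G has_vector_derivative G' s) (at s within {0..T})"
proof -
  have "\<exists>g. \<forall>x\<in>{0..T}. (\<lambda>n. F n x) \<longlonglongrightarrow> g x \<and> (g has_derivative (\<lambda>h. h *\<^sub>R G' x)) (at x within {0..T})"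
  proof (rule has_derivative_sequence[where f'="\<lambda>n x h. h *\<^sub>R F' n x"])
    show "convex {0..T}" by simp
    show "(F n has_derivative (\<lambda>h. h *\<^sub>R F' n x)) (at x within {0..T})" if "x \<in> {0..T}" for n x
      using dF[OF that] unfolding has_vector_derivative_def .
    show "\<forall>\<^sub>F n in sequentially. \<forall>x\<in>{0..T}. \<forall>h. norm (h *\<^sub>R F' n x - h *\<^sub>R G' x) \<le> e * norm h"
      if e: "e > 0" for e
    proof -
      have "\<forall>\<^sub>F n in sequentially. \<forall>s\<in>{0..T}. norm (F' n s - G' s) \<le> e" by (rule unif[OF e])
      then show ?thesis
      proof (rule eventually_mono)
        fix n assume H: "\<forall>s\<in>{0..T}. norm (F' n s - G' s) \<le> e"
        show "\<forall>x\<in>{0..T}. \<forall>h. norm (h *\<^sub>R F' n x - h *\<^sub>R G' x) \<le> e * norm h"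
        proof (intro ballI allI)
          fix x h assume x: "x \<in> {0..T}"
          have "norm (h *\<^sub>R F' n x - h *\<^sub>R G' x) = \<bar>h\<bar> * norm (F' n x - G' x)"
            by (simp add: scaleR_diff_right[symmetric])
          also have "\<dots> \<le> \<bar>h\<bar> * e" using H x by (intro mult_left_mono) auto
          finally show "norm (h *\<^sub>R F' n x - h *\<^sub>R G' x) \<le> e * norm h" by (simp add: mult.commute)
        qed
      qed
    qed
    show "0 \<in> {0..T}" using T by simp
    show "(\<lambda>n. F n 0) \<longlonglongrightarrow> G 0" using lim T by simp
  qed
  then obtain g where g: "\<And>x. x \<in> {0..T} \<Longrightarrow> (\<lambda>n. F n x) \<longlonglongrightarrow> g x"
    "\<And>x. x \<in> {0..T} \<Longrightarrow> (g has_derivative (\<lambda>h. h *\<^sub>R G' x)) (at x within {0..T})" by blast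
  have eq: "\<And>x. x \<in> {0..T} \<Longrightarrow> G x = g x" using g(1) lim LIMSEQ_unique by blast
  show ?thesis unfolding has_vector_derivative_def
    by (rule has_derivative_transform[OF s eq g(2)[OF s]])
qed

text \<open>A pointwise bound e on [a, b] bounds the integral by e (b - a); true also for
  non-integrable functions, whose integral is 0 by convention.\<close>
lemma integral_norm_le_const_bound:
  fixes f :: "real \<Rightarrow> 'a::euclidean_space"
  assumes "a \<le> b" "\<And>s. s \<in> {a..b} \<Longrightarrow> norm (f s) \<le> e"
  shows "norm (integral {a..b} f) \<le> e * (b - a)"
proof (cases "f integrable_on {a..b}")
  case True
  have "norm (integral {a..b} f) \<le> integral {a..b} (\<lambda>s. e)"
    by (rule integral_norm_bound_integral[OF True]) (auto intro: assms(2))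
  then show ?thesis using assms(1) by (simp add: mult.commute)
next
  case False
  have "norm (f a) \<le> e" using assms by simp
  then have "0 \<le> e" by (rule order_trans[OF norm_ge_zero])
  then show ?thesis using False assms(1) by (simp add: not_integrable_integral)
qed

lemma average_tendsto:
  fixes F :: "real \<Rightarrow> 'a::euclidean_space"
  assumes F_cont: "continuous_on {0..} F" and t: "t \<ge> 0"
  shows "((\<lambda>T. (1/T) *\<^sub>R integral {t..t+T} F) \<longlongrightarrow> F t) (at_right 0)"
proof (rule tendstoI)
  fix e :: real assume e: "e > 0"
  obtain d where d: "d > 0" "\<And>s. s \<in> {0..} \<Longrightarrow> dist s t < d \<Longrightarrow> dist (F s) (F t) < e/2"
    using F_cont t e unfolding continuous_on_iff by (metis atLeast_iff half_gt_zero)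
  show "\<forall>\<^sub>F T in at_right 0. dist ((1/T) *\<^sub>R integral {t..t+T} F) (F t) < e"
    unfolding eventually_at_right_field
  proof (intro exI[of _ d] conjI allI impI)
    show "0 < d" by (rule d(1))
    fix T :: real assume T: "0 < T" "T < d"
    have int: "F integrable_on {t..t+T}"
      by (rule integrable_continuous_interval, rule continuous_on_subset[OF F_cont]) (use t in auto)
    have i1: "integral {t..t+T} (\<lambda>s. F s - F t) = integral {t..t+T} F - T *\<^sub>R F t"
      by (subst integral_diff[OF int integrable_const_ivl]) (use T in simp)
    have eq: "(1/T) *\<^sub>R integral {t..t+T} F - F t = (1/T) *\<^sub>R integral {t..t+T} (\<lambda>s. F s - F t)"
      unfolding i1 using T by (simp add: scaleR_diff_right)
    have "norm (integral {t..t+T} (\<lambda>s. F s - F t)) \<le> (e/2) * ((t + T) - t)"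
    proof (rule integral_norm_le_const_bound)
      fix s assume s: "s \<in> {t..t+T}"
      have "dist (F s) (F t) < e/2" using s t T by (intro d(2)) (auto simp: dist_real_def)
      then show "norm (F s - F t) \<le> e/2" by (simp add: dist_norm)
    qed (use T in simp)
    then have "norm ((1/T) *\<^sub>R integral {t..t+T} (\<lambda>s. F s - F t)) \<le> (1/T) * ((e/2) * T)"
      using T by (simp add: divide_le_eq mult.commute)
    also have "\<dots> < e" using T e by simp
    finally show "dist ((1/T) *\<^sub>R integral {t..t+T} F) (F t) < e"
      unfolding dist_norm eq .
  qed
qed

text \<open>Uniform convergence with rate c/omega implies two-scale flow convergence: Lipschitz
  observables then converge uniformly, hence so do their averages.\<close>
lemma two_scale_of_uniform_rate:
  fixes yw :: "real \<Rightarrow> real \<Rightarrow> 'a::real_normed_vector"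
  assumes rate: "\<And>\<omega> s. \<omega> \<ge> w0 \<Longrightarrow> s \<ge> 0 \<Longrightarrow> norm (yw \<omega> s - y s) \<le> c / \<omega>"
  shows "two_scale_flow_conv yw y"
  unfolding two_scale_flow_conv_def
proof (intro allI impI)
  fix t :: real and \<phi> :: "'a \<Rightarrow> real"
  assume t: "t \<ge> 0" and "bounded (range \<phi>) \<and> (\<exists>C. C-lipschitz_on UNIV \<phi>)"
  then obtain C where C: "C-lipschitz_on UNIV \<phi>" by blast
  have C0: "C \<ge> 0" using lipschitz_on_nonneg[OF C] .
  have average_small: "norm ((1 / T) * integral {t..t+T} (\<lambda>s. \<phi> (yw \<omega> s) - \<phi> (y s))) \<le> C * c / \<omega>"
    if T: "T > 0" and w: "\<omega> \<ge> w0" for T \<omega>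
  proof -
    have "norm (integral {t..t+T} (\<lambda>s. \<phi> (yw \<omega> s) - \<phi> (y s))) \<le> (C * c / \<omega>) * ((t + T) - t)"
    proof (rule integral_norm_le_const_bound)
      fix s assume "s \<in> {t..t+T}"
      then have s0: "s \<ge> 0" using t by simp
      have "norm (\<phi> (yw \<omega> s) - \<phi> (y s)) \<le> C * dist (yw \<omega> s) (y s)"
        using lipschitz_onD[OF C] by (simp add: dist_norm)
      also have "\<dots> \<le> C * (c / \<omega>)"
        using rate[OF w s0] C0 by (intro mult_left_mono) (auto simp: dist_norm)
      finally show "norm (\<phi> (yw \<omega> s) - \<phi> (y s)) \<le> C * c / \<omega>" by simp
    qed (use T in simp)
    then show ?thesis using T by (simp add: abs_mult divide_le_eq mult.commute)
  qed
  show "iter_lim (\<lambda>\<omega> T. (1 / T) * integral {t..t+T} (\<lambda>s. \<phi> (yw \<omega> s) - \<phi> (y s))) 0"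
    unfolding iter_lim_def
  proof (intro exI[of _ "\<lambda>T. 0"] conjI)
    show "\<forall>\<^sub>F T in at_right 0.
        ((\<lambda>\<omega>. (1 / T) * integral {t..t+T} (\<lambda>s. \<phi> (yw \<omega> s) - \<phi> (y s))) \<longlongrightarrow> 0) at_top"
      using eventually_at_right_less[of "0::real"]
    proof (rule eventually_mono)
      fix T :: real assume T: "0 < T"
      have "\<forall>\<^sub>F \<omega> in at_top.
          norm ((1 / T) * integral {t..t+T} (\<lambda>s. \<phi> (yw \<omega> s) - \<phi> (y s))) \<le> C * c / \<omega>"
        using eventually_ge_at_top[of w0] by (rule eventually_mono) (rule average_small[OF T])
      then show "((\<lambda>\<omega>. (1 / T) * integral {t..t+T} (\<lambda>s. \<phi> (yw \<omega> s) - \<phi> (y s))) \<longlongrightarrow> 0) at_top"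
        by (rule Lim_null_comparison) (rule tendsto_const_div_at_top)
    qed
  qed simp
qed

text \<open>The algebraic cancellation behind energy conservation for the penalized system: the
  work of the penalty force -omega^2 g^T Dg equals minus the rate of change of the penalty
  energy omega^2 |g|^2.\<close>
lemma energy_balance:
  fixes v F1 :: "real^'p" and w F2 G :: "real^'m" and D :: "real^'m^'m"
  shows "2 * (v \<bullet> F1) + 2 * (w \<bullet> (F2 - c *\<^sub>R (G v* D))) + 2 * (- (F1 \<bullet> v) - (F2 \<bullet> w))
       + c * (2 * (G \<bullet> (D *v w))) = 0"
proof -
  have "w \<bullet> (G v* D) = G \<bullet> (D *v w)" using dot_lmul_matrix[of G D w] by (simp add: inner_commute)
  then show ?thesis by (simp add: inner_diff_right inner_commute algebra_simps)
qed

locale penalized_system =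
  fixes U :: "(real^('p::finite)) \<times> (real^('m::finite)) \<Rightarrow> real"
    and f1 :: "(real^'p) \<times> (real^'m) \<Rightarrow> real^'p"
    and f2 :: "(real^'p) \<times> (real^'m) \<Rightarrow> real^'m"
    and g :: "real^'m \<Rightarrow> real^'m"
    and Dg :: "real^'m \<Rightarrow> real^'m^'m"
    and xw :: "real \<Rightarrow> real \<Rightarrow> real^'p"
    and yw :: "real \<Rightarrow> real \<Rightarrow> real^'m"
    and x0 x1 :: "real^'p" and y0 y1 :: "real^'m"
  assumes U_grad: "\<And>x y. (U has_derivative (\<lambda>(h, k). - (f1 (x, y) \<bullet> h) - (f2 (x, y) \<bullet> k))) (at (x, y))"
    and g_deriv: "\<And>y. (g has_derivative (\<lambda>h. Dg y *v h)) (at y)"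
    and f1_C1: "C1_bdd_deriv f1"
    and f2_C1: "C1_bdd_deriv f2"
    and Dg_C1: "C1_bdd_deriv Dg"
    and sol: "\<And>\<omega>. \<omega> > 0 \<Longrightarrow>
               solves2 (xw \<omega>) (\<lambda>t. f1 (xw \<omega> t, yw \<omega> t)) x0 x1 \<and>
               solves2 (yw \<omega>) (\<lambda>t. f2 (xw \<omega> t, yw \<omega> t) - \<omega>\<^sup>2 *\<^sub>R (g (yw \<omega> t) v* Dg (yw \<omega> t))) y0 y1"
    and g_y0: "g y0 = 0"
    and Dg_y1: "Dg y0 *v y1 = 0"
    and bdd: "\<exists>B. \<forall>\<omega>>0. \<forall>t\<ge>0. norm (xw \<omega> t) \<le> B \<and> norm (yw \<omega> t) \<le> B"
    and nonsing: "\<exists>\<epsilon>>0. \<forall>y\<in>ball y0 \<epsilon>. invertible (Dg y)"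
begin

definition "xd \<omega> = (SOME z'. (\<forall>t\<ge>0. (xw \<omega> has_vector_derivative z' t) (at t within {0..}) \<and>
      (z' has_vector_derivative f1 (xw \<omega> t, yw \<omega> t)) (at t within {0..})) \<and> xw \<omega> 0 = x0 \<and> z' 0 = x1)"
definition "yd \<omega> = (SOME z'. (\<forall>t\<ge>0. (yw \<omega> has_vector_derivative z' t) (at t within {0..}) \<and>
      (z' has_vector_derivative (f2 (xw \<omega> t, yw \<omega> t) - \<omega>\<^sup>2 *\<^sub>R (g (yw \<omega> t) v* Dg (yw \<omega> t)))) (at t within {0..}))
      \<and> yw \<omega> 0 = y0 \<and> z' 0 = y1)"
definition "ydd \<omega> t = f2 (xw \<omega> t, yw \<omega> t) - \<omega>\<^sup>2 *\<^sub>R (g (yw \<omega> t) v* Dg (yw \<omega> t))"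

lemma xd: assumes "\<omega> > 0"
  shows "\<And>t. t \<ge> 0 \<Longrightarrow> (xw \<omega> has_vector_derivative xd \<omega> t) (at t within {0..})"
    "\<And>t. t \<ge> 0 \<Longrightarrow> (xd \<omega> has_vector_derivative f1 (xw \<omega> t, yw \<omega> t)) (at t within {0..})"
    "xw \<omega> 0 = x0" "xd \<omega> 0 = x1"
proof -
  have "\<exists>z'. (\<forall>t\<ge>0. (xw \<omega> has_vector_derivative z' t) (at t within {0..}) \<and>
      (z' has_vector_derivative f1 (xw \<omega> t, yw \<omega> t)) (at t within {0..})) \<and> xw \<omega> 0 = x0 \<and> z' 0 = x1"
    using sol[OF assms] unfolding solves2_def by blast
  from someI_ex[OF this] show "\<And>t. t \<ge> 0 \<Longrightarrow> (xw \<omega> has_vector_derivative xd \<omega> t) (at t within {0..})"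
    "\<And>t. t \<ge> 0 \<Longrightarrow> (xd \<omega> has_vector_derivative f1 (xw \<omega> t, yw \<omega> t)) (at t within {0..})"
    "xw \<omega> 0 = x0" "xd \<omega> 0 = x1" unfolding xd_def by auto
qed

lemma yd: assumes "\<omega> > 0"
  shows "\<And>t. t \<ge> 0 \<Longrightarrow> (yw \<omega> has_vector_derivative yd \<omega> t) (at t within {0..})"
    "\<And>t. t \<ge> 0 \<Longrightarrow> (yd \<omega> has_vector_derivative ydd \<omega> t) (at t within {0..})"
    "yw \<omega> 0 = y0" "yd \<omega> 0 = y1"
proof -
  have "\<exists>z'. (\<forall>t\<ge>0. (yw \<omega> has_vector_derivative z' t) (at t within {0..}) \<and>
      (z' has_vector_derivative (f2 (xw \<omega> t, yw \<omega> t) - \<omega>\<^sup>2 *\<^sub>R (g (yw \<omega> t) v* Dg (yw \<omega> t)))) (at t within {0..}))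
      \<and> yw \<omega> 0 = y0 \<and> z' 0 = y1"
    using sol[OF assms] unfolding solves2_def by blast
  from someI_ex[OF this] show "\<And>t. t \<ge> 0 \<Longrightarrow> (yw \<omega> has_vector_derivative yd \<omega> t) (at t within {0..})"
    "\<And>t. t \<ge> 0 \<Longrightarrow> (yd \<omega> has_vector_derivative ydd \<omega> t) (at t within {0..})"
    "yw \<omega> 0 = y0" "yd \<omega> 0 = y1" unfolding yd_def ydd_def by auto
qed

definition "A = Dg y0"

lemma A_inv: "invertible A"
  using nonsing unfolding A_def by auto

definition "Ai = matrix_inv A"

lemma Ai: "A ** Ai = mat 1" "Ai ** A = mat 1"
proof -
  have "\<exists>A'. A ** A' = mat 1 \<and> A' ** A = mat 1" using A_inv unfolding invertible_def by blast
  from someI_ex[OF this] show "A ** Ai = mat 1" "Ai ** A = mat 1"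
    unfolding Ai_def matrix_inv_def by auto
qed

lemma vA_Ai: "(u v* A) v* Ai = u" "(u v* Ai) v* A = u"
  by (simp_all add: vector_matrix_mul_assoc Ai)

text \<open>Since A is invertible, the initial velocity condition forces y1 = 0.\<close>
lemma y1_0: "y1 = 0"
proof -
  have "Ai *v (A *v y1) = y1" by (simp add: matrix_vector_mul_assoc Ai)
  then show ?thesis using Dg_y1 unfolding A_def by simp
qed

definition "cA = 1 / (norm Ai + 1)"

lemma cA_pos: "cA > 0" unfolding cA_def by (simp add: add_nonneg_pos)

lemma cA_bound: "cA * norm h \<le> norm (A *v h)"
proof -
  have "norm h = norm (Ai *v (A *v h))" by (simp add: matrix_vector_mul_assoc Ai)
  also have "\<dots> \<le> norm Ai * norm (A *v h)" by (rule mat_vec_norm)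
  also have "\<dots> \<le> (norm Ai + 1) * norm (A *v h)" by (simp add: mult_right_mono)
  finally have le: "norm h \<le> (norm Ai + 1) * norm (A *v h)" .
  have pos: "norm Ai + 1 > 0" by (simp add: add_nonneg_pos)
  have "cA * norm h = norm h / (norm Ai + 1)" unfolding cA_def by simp
  also have "\<dots> \<le> norm (A *v h)" using pos_divide_le_eq[OF pos] le by (simp add: mult.commute)
  finally show ?thesis .
qed

definition "L1 = (SOME L. L > 0 \<and> (\<forall>a b. norm (f1 a - f1 b) \<le> L * norm (a - b)))"
definition "L2 = (SOME L. L > 0 \<and> (\<forall>a b. norm (f2 a - f2 b) \<le> L * norm (a - b)))"
definition "LD = (SOME L. L > 0 \<and> (\<forall>a b. norm (Dg a - Dg b) \<le> L * norm (a - b)))"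

lemma L1: "L1 > 0" "norm (f1 a - f1 b) \<le> L1 * norm (a - b)"
  using someI_ex[OF C1_bdd_deriv_lipschitz[OF f1_C1]] unfolding L1_def by blast+
lemma L2: "L2 > 0" "norm (f2 a - f2 b) \<le> L2 * norm (a - b)"
  using someI_ex[OF C1_bdd_deriv_lipschitz[OF f2_C1]] unfolding L2_def by blast+
lemma LD: "LD > 0" "norm (Dg a - Dg b) \<le> LD * norm (a - b)"
  using someI_ex[OF C1_bdd_deriv_lipschitz[OF Dg_C1]] unfolding LD_def by blast+

lemma pair_lip1: "norm (f1 (a, b) - f1 (c, d)) \<le> L1 * (norm (a - c) + norm (b - d))"
  using L1 by (intro lipschitz_pair) auto

lemma pair_lip2: "norm (f2 (a, b) - f2 (c, d)) \<le> L2 * (norm (a - c) + norm (b - d))"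
  using L2 by (intro lipschitz_pair) auto

lemma g_linearization: "norm (g y - A *v (y - y0)) \<le> LD * (norm (y - y0))^2"
proof -
  define r where "r = norm (y - y0)"
  define h where "h z = g z - A *v z" for z
  have "norm (h y - h y0) \<le> (LD * r) * norm (y - y0)"
  proof (rule differentiable_bound[where S="cball y0 r" and f'="\<lambda>z k. (Dg z - A) *v k"])
    show "convex (cball y0 r)" by simp
    show "(h has_derivative (\<lambda>k. (Dg z - A) *v k)) (at z within cball y0 r)" for z
    proof -
      have "(h has_derivative (\<lambda>k. Dg z *v k - A *v k)) (at z)"
        unfolding h_def by (intro derivative_intros g_deriv bounded_linear_imp_has_derivative matrix_vector_mul_bounded_linear)
      then show ?thesis by (simp add: matrix_vector_mult_diff_rdistrib has_derivative_at_withinI)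
    qed
    show "onorm (\<lambda>k. (Dg z - A) *v k) \<le> LD * r" if "z \<in> cball y0 r" for z
    proof (rule onorm_le)
      fix k
      have "norm ((Dg z - A) *v k) \<le> norm (Dg z - A) * norm k" by (rule mat_vec_norm)
      also have "\<dots> \<le> (LD * norm (z - y0)) * norm k"
        unfolding A_def by (intro mult_right_mono LD) simp
      also have "\<dots> \<le> (LD * r) * norm k"
        using that LD(1) by (intro mult_right_mono mult_left_mono) (auto simp: dist_norm norm_minus_commute)
      finally show "norm ((Dg z - A) *v k) \<le> LD * r * norm k" .
    qed
  qed (auto simp: r_def dist_norm norm_minus_commute)
  moreover have "h y - h y0 = g y - A *v (y - y0)"
    unfolding h_def using g_y0 by (simp add: matrix_vector_mult_diff_distrib)
  ultimately show ?thesis unfolding r_def by (simp add: power2_eq_square mult.assoc)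
qed

text \<open>Radius of a ball around y0 on which the linear part of g dominates.\<close>
definition "r0 = cA / (2 * LD)"

lemma r0_pos: "r0 > 0" unfolding r0_def using cA_pos LD(1) by simp

lemma g_lower_bound:
  assumes "norm (y - y0) \<le> r0"
  shows "(cA / 2) * norm (y - y0) \<le> norm (g y)"
proof -
  define d where "d = norm (y - y0)"
  have "cA * d \<le> norm (A *v (y - y0))" unfolding d_def by (rule cA_bound)
  also have "\<dots> \<le> norm (g y) + norm (g y - A *v (y - y0))"
    using norm_triangle_sub[of "A *v (y - y0)" "g y"] by (simp add: norm_minus_commute)
  also have "\<dots> \<le> norm (g y) + LD * d^2" unfolding d_def using g_linearization by simp
  finally have 1: "cA * d \<le> norm (g y) + LD * d^2" .
  have "LD * d \<le> cA / 2" using assms LD(1) unfolding d_def r0_def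
    by (simp add: field_simps)
  then have "LD * d^2 \<le> (cA/2) * d" unfolding power2_eq_square
    using mult_right_mono[of "LD * d" "cA/2" d] by (simp add: d_def mult.assoc)
  with 1 show ?thesis unfolding d_def by simp
qed

text \<open>Total energy of the initial data (the penalty term vanishes since g y0 = 0).\<close>
definition "E0 = x1 \<bullet> x1 + 2 * U (x0, y0)"

lemma U_comp_deriv:
  assumes "(a has_vector_derivative a') (at t within S)" "(b has_vector_derivative b') (at t within S)"
  shows "((\<lambda>s. U (a s, b s)) has_real_derivative
     (- (f1 (a t, b t) \<bullet> a') - (f2 (a t, b t) \<bullet> b'))) (at t within S)"
proof -
  have p: "((\<lambda>s. (a s, b s)) has_derivative (\<lambda>h. (h *\<^sub>R a', h *\<^sub>R b'))) (at t within S)"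
    using assms unfolding has_vector_derivative_def by (intro has_derivative_Pair)
  have "((\<lambda>s. U (a s, b s)) has_derivative
      (\<lambda>h. (\<lambda>(h, k). - (f1 (a t, b t) \<bullet> h) - (f2 (a t, b t) \<bullet> k)) (h *\<^sub>R a', h *\<^sub>R b'))) (at t within S)"
    using has_derivative_compose[OF p U_grad] by simp
  moreover have "(\<lambda>h. (\<lambda>(h, k). - (f1 (a t, b t) \<bullet> h) - (f2 (a t, b t) \<bullet> k)) (h *\<^sub>R a', h *\<^sub>R b'))
      = (*) (- (f1 (a t, b t) \<bullet> a') - (f2 (a t, b t) \<bullet> b'))"
    by (auto simp: algebra_simps)
  ultimately show ?thesis by (simp add: has_field_derivative_def)
qed

lemma g_comp_deriv:
  assumes "(b has_vector_derivative b') (at t within S)"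
  shows "((\<lambda>s. g (b s)) has_vector_derivative (Dg (b t) *v b')) (at t within S)"
proof -
  have "((\<lambda>s. g (b s)) has_derivative (\<lambda>h. Dg (b t) *v (h *\<^sub>R b'))) (at t within S)"
    using has_derivative_compose[OF assms[unfolded has_vector_derivative_def] g_deriv] .
  then show ?thesis unfolding has_vector_derivative_def by (simp add: matrix_vector_mult_scaleR)
qed

lemma energy_conserved:
  assumes "\<omega> > 0" "t \<ge> 0"
  shows "xd \<omega> t \<bullet> xd \<omega> t + yd \<omega> t \<bullet> yd \<omega> t + 2 * U (xw \<omega> t, yw \<omega> t)
         + \<omega>\<^sup>2 * (g (yw \<omega> t) \<bullet> g (yw \<omega> t)) = E0"
proof -
  define E where "E s = xd \<omega> s \<bullet> xd \<omega> s + yd \<omega> s \<bullet> yd \<omega> s + 2 * U (xw \<omega> s, yw \<omega> s)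
         + \<omega>\<^sup>2 * (g (yw \<omega> s) \<bullet> g (yw \<omega> s))" for s
  have "(E has_real_derivative 0) (at s within {0..})" if s: "s \<ge> 0" for s
  proof -
    note d1 = inner_self_deriv[OF xd(2)[OF assms(1) s]]
    note d2 = inner_self_deriv[OF yd(2)[OF assms(1) s]]
    note d3 = U_comp_deriv[OF xd(1)[OF assms(1) s] yd(1)[OF assms(1) s]]
    note d4 = inner_self_deriv[OF g_comp_deriv[OF yd(1)[OF assms(1) s]]]
    have "(E has_real_derivative
       (2 * (xd \<omega> s \<bullet> f1 (xw \<omega> s, yw \<omega> s)) + 2 * (yd \<omega> s \<bullet> ydd \<omega> s)
        + 2 * (- (f1 (xw \<omega> s, yw \<omega> s) \<bullet> xd \<omega> s) - (f2 (xw \<omega> s, yw \<omega> s) \<bullet> yd \<omega> s))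
        + \<omega>\<^sup>2 * (2 * (g (yw \<omega> s) \<bullet> (Dg (yw \<omega> s) *v yd \<omega> s))))) (at s within {0..})"
      unfolding E_def by (rule DERIV_add[OF DERIV_add[OF DERIV_add[OF d1 d2] DERIV_cmult[OF d3]] DERIV_cmult[OF d4]])
    moreover have "2 * (xd \<omega> s \<bullet> f1 (xw \<omega> s, yw \<omega> s)) + 2 * (yd \<omega> s \<bullet> ydd \<omega> s)
        + 2 * (- (f1 (xw \<omega> s, yw \<omega> s) \<bullet> xd \<omega> s) - (f2 (xw \<omega> s, yw \<omega> s) \<bullet> yd \<omega> s))
        + \<omega>\<^sup>2 * (2 * (g (yw \<omega> s) \<bullet> (Dg (yw \<omega> s) *v yd \<omega> s))) = 0"
      unfolding ydd_def by (rule energy_balance)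
    ultimately show ?thesis by simp
  qed
  then have "E t = E 0" using zero_deriv_const_atLeast assms(2) by blast
  moreover have "E 0 = E0"
    unfolding E_def E0_def using xd(3,4)[OF assms(1)] yd(3,4)[OF assms(1)] y1_0 g_y0 by simp
  ultimately show ?thesis unfolding E_def by simp
qed

text \<open>U is continuous, so it is bounded below on the bounded region visited by the solutions.\<close>
lemma U_cont: "continuous_on S U"
proof -
  have "isCont U z" for z
    using has_derivative_continuous[OF U_grad[of "fst z" "snd z"]] by simp
  then show ?thesis by (simp add: continuous_at_imp_continuous_on)
qed

definition "Bd = (SOME B. \<forall>\<omega>>0. \<forall>t\<ge>0. norm (xw \<omega> t) \<le> B \<and> norm (yw \<omega> t) \<le> B)"

lemma Bd: "\<omega> > 0 \<Longrightarrow> t \<ge> 0 \<Longrightarrow> norm (xw \<omega> t) \<le> Bd"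
  "\<omega> > 0 \<Longrightarrow> t \<ge> 0 \<Longrightarrow> norm (yw \<omega> t) \<le> Bd"
  using someI_ex[OF bdd] unfolding Bd_def by blast+

lemma Bd_nonneg: "Bd \<ge> 0"
proof -
  have "norm (xw 1 0) \<le> Bd" using Bd(1)[of 1 0] by simp
  then show ?thesis by (rule order_trans[OF norm_ge_zero])
qed

definition "Umin = (SOME m. \<forall>x y. norm x \<le> Bd \<longrightarrow> norm y \<le> Bd \<longrightarrow> m \<le> U (x, y))"

lemma Umin: "norm x \<le> Bd \<Longrightarrow> norm y \<le> Bd \<Longrightarrow> Umin \<le> U (x, y)"
proof -
  have "\<exists>z\<in>cball 0 Bd \<times> cball 0 Bd. \<forall>w\<in>cball 0 Bd \<times> cball 0 Bd. U z \<le> U w"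
    using Bd_nonneg by (intro continuous_attains_inf) (auto intro: compact_Times U_cont)
  then obtain z where "\<forall>w\<in>cball 0 Bd \<times> cball 0 Bd. U z \<le> U w" by blast
  then have "\<forall>x y. norm x \<le> Bd \<longrightarrow> norm y \<le> Bd \<longrightarrow> U z \<le> U (x, y)" by auto
  then have "\<exists>m. \<forall>x y. norm x \<le> Bd \<longrightarrow> norm y \<le> Bd \<longrightarrow> m \<le> U (x, y)" by blast
  from someI_ex[OF this] show "norm x \<le> Bd \<Longrightarrow> norm y \<le> Bd \<Longrightarrow> Umin \<le> U (x, y)"
    unfolding Umin_def by blast
qed

text \<open>Uniform bound for the kinetic and penalty energies.\<close>
definition "K2 = E0 - 2 * Umin"

lemma energy_bounds:
  assumes "\<omega> > 0" "t \<ge> 0"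
  shows "xd \<omega> t \<bullet> xd \<omega> t \<le> K2" "\<omega>\<^sup>2 * (g (yw \<omega> t) \<bullet> g (yw \<omega> t)) \<le> K2"
proof -
  have "Umin \<le> U (xw \<omega> t, yw \<omega> t)" using Umin Bd assms by blast
  moreover have "0 \<le> yd \<omega> t \<bullet> yd \<omega> t" "0 \<le> xd \<omega> t \<bullet> xd \<omega> t"
    "0 \<le> \<omega>\<^sup>2 * (g (yw \<omega> t) \<bullet> g (yw \<omega> t))" by simp_all
  ultimately show "xd \<omega> t \<bullet> xd \<omega> t \<le> K2" "\<omega>\<^sup>2 * (g (yw \<omega> t) \<bullet> g (yw \<omega> t)) \<le> K2"
    unfolding K2_def using energy_conserved[OF assms] by linarith+
qed

lemma K2_nonneg: "K2 \<ge> 0"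
proof -
  have "xd 1 0 \<bullet> xd 1 0 \<le> K2" using energy_bounds(1)[of 1 0] by simp
  moreover have "0 \<le> xd 1 0 \<bullet> xd 1 0" by simp
  ultimately show ?thesis by linarith
qed

lemma xd_bound: "\<omega> > 0 \<Longrightarrow> t \<ge> 0 \<Longrightarrow> norm (xd \<omega> t) \<le> sqrt K2"
  using energy_bounds(1) by (simp add: norm_eq_sqrt_inner)

lemma g_bound:
  assumes "\<omega> > 0" "t \<ge> 0"
  shows "norm (g (yw \<omega> t)) \<le> sqrt K2 / \<omega>"
proof -
  have "(\<omega> * norm (g (yw \<omega> t)))^2 \<le> K2"
    using energy_bounds(2)[OF assms] by (simp add: power_mult_distrib power2_norm_eq_inner)
  then have "\<omega> * norm (g (yw \<omega> t)) \<le> sqrt K2"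
    using real_le_rsqrt by blast
  then show ?thesis using assms(1) by (simp add: field_simps)
qed

text \<open>Combined with g_lower_bound this confines yw omega to a ball of radius R/omega around
  y0, once omega >= omega0 (which makes R/omega < r0).\<close>
definition "R = 2 * sqrt K2 / cA"
definition "\<omega>0 = R / r0 + 1"

lemma R_nonneg: "R \<ge> 0" unfolding R_def using cA_pos K2_nonneg by simp

lemma \<omega>0_pos: "\<omega>0 > 0" unfolding \<omega>0_def using R_nonneg r0_pos by (simp add: add_nonneg_pos)

lemma R_small: assumes "\<omega> \<ge> \<omega>0" shows "R / \<omega> < r0"
proof -
  have w: "\<omega> > 0" using assms \<omega>0_pos by simp
  have "R / r0 < \<omega>" using assms unfolding \<omega>0_def by simp
  then have "R < \<omega> * r0" using pos_divide_less_eq[OF r0_pos] by simp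
  then have "R < r0 * \<omega>" by (simp only: mult.commute)
  then show ?thesis using pos_divide_less_eq[OF w] by simp
qed

lemma yw_cont: assumes "\<omega> > 0" shows "continuous_on {0..} (yw \<omega>)"
  by (rule continuous_on_atLeast_of_deriv, rule yd(1)[OF assms])

text \<open>A
  continuity argument: yw omega cannot leave the ball of radius r0 without first
  crossing a sphere on which |g| would exceed its O(1/omega) bound.\<close>
lemma y_near_y0:
  assumes "\<omega> \<ge> \<omega>0" "t \<ge> 0"
  shows "norm (yw \<omega> t - y0) \<le> R / \<omega>"
proof (rule ccontr)
  assume "\<not> ?thesis"
  then have big: "norm (yw \<omega> t - y0) > R / \<omega>" by simp
  have wpos: "\<omega> > 0" using assms \<omega>0_pos by simp
  define v where "v = min (norm (yw \<omega> t - y0)) r0"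
  have vR: "v > R / \<omega>" using big R_small[OF assms(1)] unfolding v_def by simp
  have cont: "continuous_on {0..t} (\<lambda>s. norm (yw \<omega> s - y0))"
    by (intro continuous_intros continuous_on_subset[OF yw_cont[OF wpos]]) auto
  have "\<exists>s. 0 \<le> s \<and> s \<le> t \<and> norm (yw \<omega> s - y0) = v"
    by (rule IVT'[OF _ _ assms(2) cont]) (use yd(3)[OF wpos] vR R_nonneg wpos r0_pos in \<open>auto simp: v_def\<close>)
  then obtain s where s: "0 \<le> s" "norm (yw \<omega> s - y0) = v" by blast
  have "v \<le> r0" unfolding v_def by simp
  then have "(cA / 2) * v \<le> norm (g (yw \<omega> s))" using g_lower_bound[of "yw \<omega> s"] s(2) by simp
  also have "\<dots> \<le> sqrt K2 / \<omega>" using g_bound[OF wpos s(1)] .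
  finally have c: "(cA / 2) * v \<le> sqrt K2 / \<omega>" .
  have "v = ((cA/2) * v) / (cA/2)" using cA_pos by simp
  also have "\<dots> \<le> (sqrt K2/\<omega>)/(cA/2)" by (rule divide_right_mono[OF c]) (use cA_pos in simp)
  also have "\<dots> = R/\<omega>" unfolding R_def by (simp add: field_simps)
  finally show False using vR by simp
qed

text \<open>Growth rate for the distance of two slow trajectories.\<close>
definition "C1 = 1 + 2 * L1"

lemma C1_pos: "C1 > 0" unfolding C1_def using L1(1) by simp

lemma yw_mutually_close:
  assumes w: "\<omega> \<ge> \<omega>0" "\<omega>' \<ge> \<omega>0" and s: "s \<ge> 0"
  shows "norm (yw \<omega> s - yw \<omega>' s) \<le> R/\<omega> + R/\<omega>'"
  using norm_triangle_ineq4[of "yw \<omega> s - y0" "yw \<omega>' s - y0"] y_near_y0[OF w(1) s] y_near_y0[OF w(2) s]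
  by simp

text \<open>Gronwall estimate for the distance in phase space of the slow components of two
  penalized solutions, which are driven by O(1/omega)-close forces.\<close>
lemma xw_cauchy_sq:
  assumes w: "\<omega> \<ge> \<omega>0" "\<omega>' \<ge> \<omega>0" and t: "t \<ge> 0"
  shows "(norm (xw \<omega> t - xw \<omega>' t))^2 + (norm (xd \<omega> t - xd \<omega>' t))^2
      \<le> (L1 * (R/\<omega> + R/\<omega>')^2 * t) * exp (C1 * t)"
proof -
  have wp: "\<omega> > 0" "\<omega>' > 0" using w \<omega>0_pos by auto
  define dx where "dx s = xw \<omega> s - xw \<omega>' s" for s
  define dv where "dv s = xd \<omega> s - xd \<omega>' s" for s
  define df where "df s = f1 (xw \<omega> s, yw \<omega> s) - f1 (xw \<omega>' s, yw \<omega>' s)" for s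
  define u where "u s = (dx s, dv s)" for s
  have der: "(u has_vector_derivative (dv s, df s)) (at s within {0..t})" if s: "s \<in> {0..t}" for s
  proof -
    have s0: "s \<ge> 0" using s by simp
    have "(dx has_vector_derivative dv s) (at s within {0..})"
      unfolding dx_def dv_def by (intro has_vector_derivative_diff xd(1)[OF wp(1) s0] xd(1)[OF wp(2) s0])
    moreover have "(dv has_vector_derivative df s) (at s within {0..})"
      unfolding dv_def df_def by (intro has_vector_derivative_diff xd(2)[OF wp(1) s0] xd(2)[OF wp(2) s0])
    ultimately have "(u has_vector_derivative (dv s, df s)) (at s within {0..})"
      unfolding u_def by (intro has_vector_derivative_Pair)
    then show ?thesis by (rule has_vector_derivative_within_subset) auto
  qed
  have growth: "2 * (u s \<bullet> (dv s, df s)) \<le> C1 * (u s \<bullet> u s) + L1 * (R/\<omega> + R/\<omega>')^2"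
    if s: "s \<in> {0..t}" for s
  proof -
    have s0: "s \<ge> 0" using s by simp
    have "2 * (dx s \<bullet> dv s) + 2 * (dv s \<bullet> df s)
        \<le> (1 + 2 * L1) * ((norm (dx s))^2 + (norm (dv s))^2) + L1 * (R/\<omega> + R/\<omega>')^2"
    proof (rule young_bound2[where c="norm (yw \<omega> s - yw \<omega>' s)" and e="norm (df s)"])
      show "dx s \<bullet> dv s \<le> norm (dx s) * norm (dv s)" by (rule order_trans[OF abs_ge_self Cauchy_Schwarz_ineq2])
      show "dv s \<bullet> df s \<le> norm (dv s) * norm (df s)" by (rule order_trans[OF abs_ge_self Cauchy_Schwarz_ineq2])
      show "norm (df s) \<le> L1 * (norm (dx s) + norm (yw \<omega> s - yw \<omega>' s))"
        unfolding df_def dx_def by (rule pair_lip1)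
    qed (use yw_mutually_close[OF w s0] L1(1) in auto)
    then show ?thesis unfolding u_def C1_def by (simp add: power2_norm_eq_inner)
  qed
  have "u 0 = 0" unfolding u_def dx_def dv_def using xd(3,4)[OF wp(1)] xd(3,4)[OF wp(2)] by (simp add: zero_prod_def)
  then have "u t \<bullet> u t \<le> (L1 * (R/\<omega> + R/\<omega>')^2 * t) * exp (C1 * t)"
    using deviation_growth[OF t der growth] C1_pos L1(1) by (simp add: mult.assoc)
  then show ?thesis unfolding u_def dx_def dv_def by (simp add: power2_norm_eq_inner)
qed

text \<open>The resulting rate: both slow components are Cauchy in omega with rate Wt t/omega.\<close>
definition "Wt t = R * sqrt (L1 * t * exp (C1 * t))"

lemma Wt_nonneg: "t \<ge> 0 \<Longrightarrow> Wt t \<ge> 0"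
  unfolding Wt_def using R_nonneg L1(1) by simp

lemma Wt_mono: "0 \<le> s \<Longrightarrow> s \<le> t \<Longrightarrow> Wt s \<le> Wt t"
  unfolding Wt_def using R_nonneg L1(1) C1_pos
  by (intro mult_left_mono real_sqrt_le_mono mult_mono) auto

lemma xw_cauchy:
  assumes w: "\<omega> \<ge> \<omega>0" "\<omega>' \<ge> \<omega>0" and t: "t \<ge> 0"
  shows "norm (xw \<omega> t - xw \<omega>' t) \<le> Wt t/\<omega> + Wt t/\<omega>'"
    "norm (xd \<omega> t - xd \<omega>' t) \<le> Wt t/\<omega> + Wt t/\<omega>'"
proof -
  have wp: "\<omega> > 0" "\<omega>' > 0" using w \<omega>0_pos by auto
  define Q where "Q = (L1 * (R/\<omega> + R/\<omega>')^2 * t) * exp (C1 * t)"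
  have "sqrt Q = (R/\<omega> + R/\<omega>') * sqrt (L1 * t * exp (C1 * t))"
    unfolding Q_def using wp R_nonneg by (simp add: real_sqrt_mult ac_simps)
  also have "\<dots> = Wt t/\<omega> + Wt t/\<omega>'" unfolding Wt_def by (simp add: field_simps)
  finally have sQ: "sqrt Q = Wt t/\<omega> + Wt t/\<omega>'" .
  note q = xw_cauchy_sq[OF w t, folded Q_def]
  have "(norm (xw \<omega> t - xw \<omega>' t))^2 \<le> Q" using q by (smt (verit) zero_le_power2)
  then show "norm (xw \<omega> t - xw \<omega>' t) \<le> Wt t/\<omega> + Wt t/\<omega>'"
    using real_le_rsqrt sQ by metis
  have "(norm (xd \<omega> t - xd \<omega>' t))^2 \<le> Q" using q by (smt (verit) zero_le_power2)
  then show "norm (xd \<omega> t - xd \<omega>' t) \<le> Wt t/\<omega> + Wt t/\<omega>'"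
    using real_le_rsqrt sQ by metis
qed

definition "x_lim t = (SOME l. \<forall>w\<ge>\<omega>0. norm (xw w t - l) \<le> Wt t/w)"
definition "xd_lim t = (SOME l. \<forall>w\<ge>\<omega>0. norm (xd w t - l) \<le> Wt t/w)"

lemma xw_near_x_lim: assumes "t \<ge> 0" "\<omega> \<ge> \<omega>0"
  shows "norm (xw \<omega> t - x_lim t) \<le> Wt t/\<omega>" "norm (xd \<omega> t - xd_lim t) \<le> Wt t/\<omega>"
proof -
  have "\<exists>l. \<forall>w\<ge>\<omega>0. norm (xw w t - l) \<le> Wt t/w"
    by (rule cauchy_with_rate[OF \<omega>0_pos Wt_nonneg[OF assms(1)]]) (use xw_cauchy(1) assms(1) in blast)
  from someI_ex[OF this] show "norm (xw \<omega> t - x_lim t) \<le> Wt t/\<omega>" unfolding x_lim_def using assms(2) by blast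
  have "\<exists>l. \<forall>w\<ge>\<omega>0. norm (xd w t - l) \<le> Wt t/w"
    by (rule cauchy_with_rate[OF \<omega>0_pos Wt_nonneg[OF assms(1)]]) (use xw_cauchy(2) assms(1) in blast)
  from someI_ex[OF this] show "norm (xd \<omega> t - xd_lim t) \<le> Wt t/\<omega>" unfolding xd_lim_def using assms(2) by blast
qed

text \<open>A sequence of penalty parameters tending to infinity, for the sequential limit
  theorems of the library.\<close>
definition "\<omega>n n = \<omega>0 + real n"

lemma \<omega>n: "\<omega>n n \<ge> \<omega>0" "\<omega>n n > 0" unfolding \<omega>n_def using \<omega>0_pos by auto

lemma x_lim_seq:
  assumes "t \<ge> 0"
  shows "(\<lambda>n. xw (\<omega>n n) t) \<longlonglongrightarrow> x_lim t" "(\<lambda>n. xd (\<omega>n n) t) \<longlonglongrightarrow> xd_lim t"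
  unfolding \<omega>n_def
  using tendsto_seq_of_rate[where F="\<lambda>w. xw w t", OF \<omega>0_pos xw_near_x_lim(1)[OF assms]]
    tendsto_seq_of_rate[where F="\<lambda>w. xd w t", OF \<omega>0_pos xw_near_x_lim(2)[OF assms]]
  by simp_all

lemma x_lim_init: "x_lim 0 = x0" "xd_lim 0 = x1"
proof -
  have "norm (x0 - x_lim 0) \<le> 0" using xw_near_x_lim(1)[of 0 \<omega>0] xd(3)[OF \<omega>0_pos] unfolding Wt_def by simp
  then show "x_lim 0 = x0" by simp
  have "norm (x1 - xd_lim 0) \<le> 0" using xw_near_x_lim(2)[of 0 \<omega>0] xd(4)[OF \<omega>0_pos] unfolding Wt_def by simp
  then show "xd_lim 0 = x1" by simp
qed

lemma x_lim_bounded: assumes "t \<ge> 0" shows "norm (x_lim t) \<le> Bd" "norm (xd_lim t) \<le> sqrt K2"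
proof -
  show "norm (x_lim t) \<le> Bd"
  proof (rule le_of_le_plus_rate[OF \<omega>0_pos Wt_nonneg[OF assms]])
    fix w assume w: "w \<ge> \<omega>0"
    have "norm (x_lim t) \<le> norm (xw w t) + norm (xw w t - x_lim t)"
      using norm_triangle_sub[of "x_lim t" "xw w t"] by (simp add: norm_minus_commute)
    then show "norm (x_lim t) \<le> Bd + Wt t / w"
      using Bd(1)[of w t] xw_near_x_lim(1)[OF assms w] w \<omega>0_pos assms by simp
  qed
  show "norm (xd_lim t) \<le> sqrt K2"
  proof (rule le_of_le_plus_rate[OF \<omega>0_pos Wt_nonneg[OF assms]])
    fix w assume w: "w \<ge> \<omega>0"
    have "norm (xd_lim t) \<le> norm (xd w t) + norm (xd w t - xd_lim t)"
      using norm_triangle_sub[of "xd_lim t" "xd w t"] by (simp add: norm_minus_commute)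
    then show "norm (xd_lim t) \<le> sqrt K2 + Wt t / w"
      using xd_bound[of w t] xw_near_x_lim(2)[OF assms w] w \<omega>0_pos assms by simp
  qed
qed

lemma xw_near_x_lim_on:
  assumes w: "\<omega> \<ge> \<omega>0" and s: "0 \<le> s" "s \<le> T"
  shows "norm (xw \<omega> s - x_lim s) \<le> Wt T / \<omega>" "norm (xd \<omega> s - xd_lim s) \<le> Wt T / \<omega>"
proof -
  have "Wt s / \<omega> \<le> Wt T / \<omega>" using Wt_mono[OF s] w \<omega>0_pos by (intro divide_right_mono) auto
  then show "norm (xw \<omega> s - x_lim s) \<le> Wt T / \<omega>" "norm (xd \<omega> s - xd_lim s) \<le> Wt T / \<omega>"
    using xw_near_x_lim[OF s(1) w] by simp_all
qed

lemma f1_near_limit: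
  assumes w: "\<omega> \<ge> \<omega>0" and s: "0 \<le> s" "s \<le> T"
  shows "norm (f1 (xw \<omega> s, yw \<omega> s) - f1 (x_lim s, y0)) \<le> L1 * (Wt T + R) / \<omega>"
proof -
  have "norm (f1 (xw \<omega> s, yw \<omega> s) - f1 (x_lim s, y0))
      \<le> L1 * (norm (xw \<omega> s - x_lim s) + norm (yw \<omega> s - y0))" by (rule pair_lip1)
  also have "\<dots> \<le> L1 * (Wt T / \<omega> + R / \<omega>)"
    using xw_near_x_lim_on(1)[OF w s] y_near_y0[OF w s(1)] L1(1) by (intro mult_left_mono add_mono) auto
  also have "\<dots> = L1 * (Wt T + R) / \<omega>" by (simp add: add_divide_distrib algebra_simps)
  finally show ?thesis .
qed

lemma rate_eventually_small:
  assumes "e > 0"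
  shows "\<forall>\<^sub>F n in sequentially. Q / \<omega>n n \<le> e"
proof -
  have "\<forall>\<^sub>F n in sequentially. Q / (\<omega>0 + real n) < e"
    by (rule order_tendstoD(2)[OF tendsto_const_div_seq[OF \<omega>0_pos] assms])
  then show ?thesis unfolding \<omega>n_def by (rule eventually_mono) simp
qed

lemma x_lim_deriv:
  assumes s: "s \<ge> 0"
  shows "(xd_lim has_vector_derivative f1 (x_lim s, y0)) (at s within {0..})"
    "(x_lim has_vector_derivative xd_lim s) (at s within {0..})"
proof -
  define T where "T = s + 1"
  have T: "T > 0" "s \<in> {0..T}" unfolding T_def using s by auto
  have "(xd_lim has_vector_derivative f1 (x_lim s, y0)) (at s within {0..T})"
  proof (rule vector_derivative_of_limit[where F="\<lambda>n. xd (\<omega>n n)" and F'="\<lambda>n s. f1 (xw (\<omega>n n) s, yw (\<omega>n n) s)", OF T(1) _ _ _ T(2)])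
    show "(xd (\<omega>n n) has_vector_derivative f1 (xw (\<omega>n n) u, yw (\<omega>n n) u)) (at u within {0..T})"
      if "u \<in> {0..T}" for n u
      using that by (intro has_vector_derivative_within_subset[OF xd(2)[OF \<omega>n(2)]]) auto
    show "(\<lambda>n. xd (\<omega>n n) u) \<longlonglongrightarrow> xd_lim u" if "u \<in> {0..T}" for u using x_lim_seq(2) that by simp
    show "\<forall>\<^sub>F n in sequentially. \<forall>u\<in>{0..T}. norm (f1 (xw (\<omega>n n) u, yw (\<omega>n n) u) - f1 (x_lim u, y0)) \<le> e"
      if "e > 0" for e
      using rate_eventually_small[OF that, of "L1 * (Wt T + R)"]
      by (rule eventually_mono) (use f1_near_limit[OF \<omega>n(1)] in \<open>fastforce intro: order_trans\<close>)
  qed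
  then show "(xd_lim has_vector_derivative f1 (x_lim s, y0)) (at s within {0..})"
    using at_within_Icc_to_atLeast s unfolding T_def by blast
  have "(x_lim has_vector_derivative xd_lim s) (at s within {0..T})"
  proof (rule vector_derivative_of_limit[where F="\<lambda>n. xw (\<omega>n n)" and F'="\<lambda>n s. xd (\<omega>n n) s", OF T(1) _ _ _ T(2)])
    show "(xw (\<omega>n n) has_vector_derivative xd (\<omega>n n) u) (at u within {0..T})"
      if "u \<in> {0..T}" for n u
      using that by (intro has_vector_derivative_within_subset[OF xd(1)[OF \<omega>n(2)]]) auto
    show "(\<lambda>n. xw (\<omega>n n) u) \<longlonglongrightarrow> x_lim u" if "u \<in> {0..T}" for u using x_lim_seq(1) that by simp
    show "\<forall>\<^sub>F n in sequentially. \<forall>u\<in>{0..T}. norm (xd (\<omega>n n) u - xd_lim u) \<le> e"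
      if "e > 0" for e
      using rate_eventually_small[OF that, of "Wt T"]
      by (rule eventually_mono) (use xw_near_x_lim_on(2)[OF \<omega>n(1)] in \<open>fastforce intro: order_trans\<close>)
  qed
  then show "(x_lim has_vector_derivative xd_lim s) (at s within {0..})"
    using at_within_Icc_to_atLeast s unfolding T_def by blast
qed

text \<open>Energy conservation for the limit motion: it carries the full energy E0, since y is
  frozen at y0.\<close>
lemma limit_energy_conserved:
  assumes t: "t \<ge> 0"
  shows "xd_lim t \<bullet> xd_lim t + 2 * U (x_lim t, y0) = E0"
proof -
  define E where "E s = xd_lim s \<bullet> xd_lim s + 2 * U (x_lim s, y0)" for s
  have "(E has_real_derivative 0) (at s within {0..})" if s: "s \<ge> 0" for s
  proof -
    have c: "((\<lambda>_. y0) has_vector_derivative 0) (at s within {0..})" by (rule has_vector_derivative_const)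
    note d1 = inner_self_deriv[OF x_lim_deriv(1)[OF s]]
    note d2 = U_comp_deriv[OF x_lim_deriv(2)[OF s] c]
    have "(E has_real_derivative (2 * (xd_lim s \<bullet> f1 (x_lim s, y0)) + 2 * (- (f1 (x_lim s, y0) \<bullet> xd_lim s) - (f2 (x_lim s, y0) \<bullet> 0))))
        (at s within {0..})"
      unfolding E_def by (rule DERIV_add[OF d1 DERIV_cmult[OF d2]])
    moreover have "xd_lim s \<bullet> f1 (x_lim s, y0) = f1 (x_lim s, y0) \<bullet> xd_lim s" by (rule inner_commute)
    ultimately show ?thesis by simp
  qed
  then have "E t = E 0" using zero_deriv_const_atLeast t by blast
  then show ?thesis unfolding E_def E0_def using x_lim_init by simp
qed

text \<open>A Lipschitz constant of U on the region visited by the trajectories.\<close>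
definition "MU = norm (f1 0) + norm (f2 0) + (L1 + L2) * (2 * Bd)"

lemma MU_nonneg: "MU \<ge> 0" unfolding MU_def using L1(1) L2(1) Bd_nonneg by simp

lemma force_bound_ball:
  assumes "norm z \<le> 2 * Bd"
  shows "norm (f1 z) + norm (f2 z) \<le> MU"
proof -
  have "norm (f1 z) \<le> norm (f1 0) + L1 * norm z" "norm (f2 z) \<le> norm (f2 0) + L2 * norm z"
    using L1(2) L2(2) by (intro lipschitz_growth; blast)+
  moreover have "L1 * norm z \<le> L1 * (2 * Bd)" "L2 * norm z \<le> L2 * (2 * Bd)"
    using assms L1(1) L2(1) by (intro mult_left_mono; simp)+
  ultimately show ?thesis unfolding MU_def by (simp add: algebra_simps)
qed

lemma U_lipschitz_ball:
  assumes "norm x \<le> Bd" "norm y \<le> Bd" "norm x' \<le> Bd" "norm y' \<le> Bd"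
  shows "\<bar>U (x, y) - U (x', y')\<bar> \<le> MU * (norm (x - x') + norm (y - y'))"
proof -
  let ?S = "cball (0::real^'p) Bd \<times> cball (0::real^'m) Bd"
  have "norm (U (x, y) - U (x', y')) \<le> MU * norm ((x, y) - (x', y'))"
  proof (rule differentiable_bound[where S="?S" and f'="\<lambda>z. (\<lambda>(h, k). - (f1 z \<bullet> h) - (f2 z \<bullet> k))"])
    show "convex ?S" by (intro convex_Times convex_cball)
    show "(U has_derivative (\<lambda>(h, k). - (f1 z \<bullet> h) - (f2 z \<bullet> k))) (at z within ?S)" for z
      using U_grad[of "fst z" "snd z"] by (simp add: has_derivative_at_withinI)
    show "onorm (\<lambda>(h, k). - (f1 z \<bullet> h) - (f2 z \<bullet> k)) \<le> MU" if z: "z \<in> ?S" for z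
    proof (rule onorm_le)
      fix hk :: "(real^'p) \<times> (real^'m)"
      obtain h k where hk: "hk = (h, k)" by (cases hk)
      have "norm z \<le> 2 * Bd" using z norm_Pair_le[of "fst z" "snd z"] by (cases z) auto
      have "\<bar>- (f1 z \<bullet> h) - (f2 z \<bullet> k)\<bar> \<le> norm (f1 z) * norm h + norm (f2 z) * norm k"
        using Cauchy_Schwarz_ineq2[of "f1 z" h] Cauchy_Schwarz_ineq2[of "f2 z" k] by linarith
      also have "\<dots> \<le> norm (f1 z) * norm hk + norm (f2 z) * norm hk"
        unfolding hk by (intro add_mono mult_left_mono norm_fst_le norm_snd_le) auto
      also have "\<dots> = (norm (f1 z) + norm (f2 z)) * norm hk" by (simp add: algebra_simps)
      also have "\<dots> \<le> MU * norm hk" using \<open>norm z \<le> 2 * Bd\<close> by (intro mult_right_mono force_bound_ball) simp_all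
      finally show "norm ((\<lambda>(h, k). - (f1 z \<bullet> h) - (f2 z \<bullet> k)) hk) \<le> MU * norm hk"
        unfolding hk by simp
    qed
  qed (use assms in auto)
  also have "\<dots> \<le> MU * (norm (x - x') + norm (y - y'))"
    using norm_Pair_le[of "x - x'" "y - y'"] MU_nonneg by (intro mult_left_mono) auto
  finally show ?thesis by simp
qed

lemma y0_bd: "norm y0 \<le> Bd" using Bd(2)[of 1 0] yd(3)[of 1] by simp

lemma kinetic_gap:
  assumes w: "\<omega> \<ge> \<omega>0" and s: "0 \<le> s" "s \<le> T"
  shows "xd_lim s \<bullet> xd_lim s - xd \<omega> s \<bullet> xd \<omega> s \<le> 2 * sqrt K2 * (Wt T / \<omega>)"
proof -
  have wp: "\<omega> > 0" using w \<omega>0_pos by simp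
  have "xd_lim s \<bullet> xd_lim s - xd \<omega> s \<bullet> xd \<omega> s = (xd_lim s + xd \<omega> s) \<bullet> (xd_lim s - xd \<omega> s)"
    by (simp add: inner_add_left inner_diff_right inner_commute[of "xd \<omega> s" "xd_lim s"])
  also have "\<dots> \<le> norm (xd_lim s + xd \<omega> s) * norm (xd_lim s - xd \<omega> s)"
    by (rule order_trans[OF abs_ge_self Cauchy_Schwarz_ineq2])
  also have "\<dots> \<le> (2 * sqrt K2) * (Wt T / \<omega>)"
  proof (rule mult_mono)
    show "norm (xd_lim s + xd \<omega> s) \<le> 2 * sqrt K2"
      using norm_triangle_ineq[of "xd_lim s" "xd \<omega> s"] x_lim_bounded(2)[OF s(1)] xd_bound[OF wp s(1)] by simp
    show "norm (xd_lim s - xd \<omega> s) \<le> Wt T / \<omega>"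
      using xw_near_x_lim_on(2)[OF w s] by (simp add: norm_minus_commute)
  qed (use K2_nonneg in auto)
  finally show ?thesis by simp
qed

lemma potential_gap:
  assumes w: "\<omega> \<ge> \<omega>0" and s: "0 \<le> s" "s \<le> T"
  shows "U (x_lim s, y0) - U (xw \<omega> s, yw \<omega> s) \<le> MU * (Wt T / \<omega> + R / \<omega>)"
proof -
  have wp: "\<omega> > 0" using w \<omega>0_pos by simp
  have "U (x_lim s, y0) - U (xw \<omega> s, yw \<omega> s) \<le> MU * (norm (x_lim s - xw \<omega> s) + norm (y0 - yw \<omega> s))"
    using U_lipschitz_ball[of "x_lim s" y0 "xw \<omega> s" "yw \<omega> s"] x_lim_bounded(1)[OF s(1)] y0_bd Bd[OF wp s(1)]
    by simp
  also have "\<dots> \<le> MU * (Wt T / \<omega> + R / \<omega>)"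
    using xw_near_x_lim_on(1)[OF w s] y_near_y0[OF w s(1)] MU_nonneg
    by (intro mult_left_mono add_mono) (auto simp: norm_minus_commute)
  finally show ?thesis .
qed

text \<open>Rate for the energy of the fast motion.\<close>
definition "Qb T = 2 * sqrt K2 * Wt T + 2 * MU * (Wt T + R)"

text \<open>Comparing the conserved energies of the penalized and the limit motion: the energy
  |yd|^2 + omega^2 |g|^2 of the fast oscillation is O(1/omega) on [0, T].\<close>
lemma fast_energy_decay:
  assumes w: "\<omega> \<ge> \<omega>0" and s: "0 \<le> s" "s \<le> T"
  shows "yd \<omega> s \<bullet> yd \<omega> s + \<omega>\<^sup>2 * (g (yw \<omega> s) \<bullet> g (yw \<omega> s)) \<le> Qb T / \<omega>"
proof -
  have wp: "\<omega> > 0" using w \<omega>0_pos by simp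
  have "yd \<omega> s \<bullet> yd \<omega> s + \<omega>\<^sup>2 * (g (yw \<omega> s) \<bullet> g (yw \<omega> s))
      = (xd_lim s \<bullet> xd_lim s - xd \<omega> s \<bullet> xd \<omega> s) + 2 * (U (x_lim s, y0) - U (xw \<omega> s, yw \<omega> s))"
    using energy_conserved[OF wp s(1)] limit_energy_conserved[OF s(1)] by simp
  also have "\<dots> \<le> 2 * sqrt K2 * (Wt T / \<omega>) + 2 * (MU * (Wt T / \<omega> + R / \<omega>))"
    using kinetic_gap[OF w s] potential_gap[OF w s] by simp
  also have "\<dots> = Qb T / \<omega>" unfolding Qb_def using wp by (simp add: field_simps)
  finally show ?thesis .
qed

lemma g_cont: "continuous_on S g"
proof -
  have "isCont g z" for z using has_derivative_continuous[OF g_deriv[of z]] by simp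
  then show ?thesis by (simp add: continuous_at_imp_continuous_on)
qed

lemma f2_cont: "continuous_on S f2"
proof -
  obtain F' where "\<And>z. (f2 has_derivative blinfun_apply (F' z)) (at z)"
    using f2_C1 unfolding C1_bdd_deriv_def by blast
  then have "isCont f2 z" for z using has_derivative_continuous by blast
  then show ?thesis by (simp add: continuous_at_imp_continuous_on)
qed

lemma vAi_bl: "bounded_linear (\<lambda>u. u v* Ai)"
proof -
  have "(\<lambda>u. u v* Ai) = (*v) (transpose Ai)" by (simp add: fun_eq_iff)
  then show ?thesis by simp
qed

lemma x_lim_cont: "continuous_on {0..} x_lim"
  by (rule continuous_on_atLeast_of_deriv, rule x_lim_deriv(2))

text \<open>The limit of the averaged penalty force omega^2 g(yw): it balances the constrained
  component of the force along the limit motion, F_lim s = f2(x_lim s, y0) A^-1.\<close>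
definition "F_lim s = f2 (x_lim s, y0) v* Ai"

lemma F_lim_cont: "continuous_on {0..} F_lim"
proof -
  have "continuous_on {0..} (\<lambda>s. f2 (x_lim s, y0))"
    by (rule continuous_on_compose2[OF f2_cont[of UNIV]]) (auto intro!: continuous_intros x_lim_cont)
  then show ?thesis unfolding F_lim_def
    by (rule continuous_on_compose2[OF linear_continuous_on[OF vAi_bl]]) auto
qed

text \<open>Multiplying the y-equation by A^-1 on the right: the penalty force equals
  F_lim - ydd A^-1 up to this residual, which is O(1/omega).\<close>
definition "force_residual \<omega> s = \<omega>\<^sup>2 *\<^sub>R g (yw \<omega> s) - F_lim s + ydd \<omega> s v* Ai"

lemma force_residual_identity:
  fixes w :: real and G P Q :: "real^'m" and D :: "real^'m^'m"
  shows "w *\<^sub>R G - Q v* Ai + (P - w *\<^sub>R (G v* D)) v* Ai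
       = (P - Q) v* Ai + (w *\<^sub>R (G v* (A - D))) v* Ai"
proof -
  have "w *\<^sub>R G = (w *\<^sub>R (G v* A)) v* Ai" by (simp add: scaleR_vector_matrix_assoc vA_Ai)
  then show ?thesis
    by (simp add: vector_matrix_mult_diff_distrib vector_matrix_left_distrib
        vector_matrix_mult_diff_rdistrib scaleR_vector_matrix_assoc scaleR_diff_right algebra_simps)
qed

lemma yd_small:
  assumes w: "\<omega> \<ge> \<omega>0" and s: "0 \<le> s" "s \<le> b"
  shows "norm (yd \<omega> s) \<le> sqrt (Qb b / \<omega>)"
proof -
  have "yd \<omega> s \<bullet> yd \<omega> s \<le> Qb b / \<omega>"
    using fast_energy_decay[OF w s] zero_le_power2[of \<omega>] inner_ge_zero[of "g (yw \<omega> s)"]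
    by (smt (verit) mult_nonneg_nonneg)
  then show ?thesis by (simp add: norm_eq_sqrt_inner)
qed

lemma penalty_small:
  assumes w: "\<omega> \<ge> \<omega>0" and s: "0 \<le> s" "s \<le> b"
  shows "\<omega>\<^sup>2 * (norm (g (yw \<omega> s)))^2 \<le> Qb b / \<omega>"
  using fast_energy_decay[OF w s] inner_ge_zero[of "yd \<omega> s"]
  unfolding power2_norm_eq_inner by linarith

lemma f2_mismatch_bound:
  assumes w: "\<omega> \<ge> \<omega>0" and s: "0 \<le> s" "s \<le> b"
  shows "norm ((f2 (xw \<omega> s, yw \<omega> s) - f2 (x_lim s, y0)) v* Ai) \<le> L2 * (Wt b + R) * norm Ai / \<omega>"
proof -
  have "norm ((f2 (xw \<omega> s, yw \<omega> s) - f2 (x_lim s, y0)) v* Ai)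
      \<le> norm (f2 (xw \<omega> s, yw \<omega> s) - f2 (x_lim s, y0)) * norm Ai" by (rule vec_mat_norm)
  also have "\<dots> \<le> (L2 * (norm (xw \<omega> s - x_lim s) + norm (yw \<omega> s - y0))) * norm Ai"
    by (intro mult_right_mono pair_lip2) simp
  also have "\<dots> \<le> (L2 * (Wt b / \<omega> + R / \<omega>)) * norm Ai"
    using xw_near_x_lim_on(1)[OF w s] y_near_y0[OF w s(1)] L2(1)
    by (intro mult_right_mono mult_left_mono add_mono) auto
  also have "\<dots> = L2 * (Wt b + R) * norm Ai / \<omega>" by (simp add: add_divide_distrib algebra_simps)
  finally show ?thesis .
qed

text \<open>Near y0 the Jacobian defect Dg y0 - Dg y is controlled by |g y| (g_lower_bound), so
  its contribution is quadratic in g and hence O(1/omega) by penalty_small.\<close>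
lemma jacobian_defect_bound:
  assumes w: "\<omega> \<ge> \<omega>0" and s: "0 \<le> s" "s \<le> b"
  shows "norm ((\<omega>\<^sup>2 *\<^sub>R (g (yw \<omega> s) v* (A - Dg (yw \<omega> s)))) v* Ai) \<le> (Qb b / \<omega>) * (2 * LD / cA) * norm Ai"
proof -
  define G where "G = g (yw \<omega> s)"
  have "(cA / 2) * norm (yw \<omega> s - y0) \<le> norm G"
    unfolding G_def using y_near_y0[OF w s(1)] R_small[OF w] by (intro g_lower_bound) simp
  then have dist_G: "norm (yw \<omega> s - y0) \<le> (2 / cA) * norm G"
    using cA_pos by (simp add: field_simps)
  have "norm (A - Dg (yw \<omega> s)) \<le> LD * norm (y0 - yw \<omega> s)" unfolding A_def by (rule LD(2))
  also have "\<dots> \<le> LD * ((2 / cA) * norm G)"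
    using dist_G LD(1) by (intro mult_left_mono) (auto simp: norm_minus_commute)
  finally have defect: "norm (A - Dg (yw \<omega> s)) \<le> LD * ((2 / cA) * norm G)" .
  have "norm ((\<omega>\<^sup>2 *\<^sub>R (G v* (A - Dg (yw \<omega> s)))) v* Ai)
      \<le> \<omega>\<^sup>2 * norm (G v* (A - Dg (yw \<omega> s))) * norm Ai"
    using vec_mat_norm[of "\<omega>\<^sup>2 *\<^sub>R (G v* (A - Dg (yw \<omega> s)))" Ai] by simp
  also have "\<dots> \<le> \<omega>\<^sup>2 * (norm G * (LD * ((2 / cA) * norm G))) * norm Ai"
  proof (intro mult_right_mono mult_left_mono)
    show "norm (G v* (A - Dg (yw \<omega> s))) \<le> norm G * (LD * ((2 / cA) * norm G))"
      using vec_mat_norm[of G "A - Dg (yw \<omega> s)"] defect by (meson mult_left_mono norm_ge_zero order_trans)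
  qed auto
  also have "\<dots> = (\<omega>\<^sup>2 * (norm G)^2) * (2 * LD / cA) * norm Ai"
    by (simp add: power2_eq_square)
  also have "\<dots> \<le> (Qb b / \<omega>) * (2 * LD / cA) * norm Ai"
    using penalty_small[OF w s] LD(1) cA_pos unfolding G_def by (intro mult_right_mono) auto
  finally show ?thesis unfolding G_def .
qed

definition "Hb b = (L2 * (Wt b + R) + Qb b * (2 * LD / cA)) * norm Ai"

lemma force_residual_bound:
  assumes w: "\<omega> \<ge> \<omega>0" and s: "0 \<le> s" "s \<le> b"
  shows "norm (force_residual \<omega> s) \<le> Hb b / \<omega>"
proof -
  have "force_residual \<omega> s
      = (f2 (xw \<omega> s, yw \<omega> s) - f2 (x_lim s, y0)) v* Ai
        + (\<omega>\<^sup>2 *\<^sub>R (g (yw \<omega> s) v* (A - Dg (yw \<omega> s)))) v* Ai"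
    unfolding force_residual_def F_lim_def ydd_def by (rule force_residual_identity)
  also have "norm \<dots> \<le> L2 * (Wt b + R) * norm Ai / \<omega> + (Qb b / \<omega>) * (2 * LD / cA) * norm Ai"
    by (rule order_trans[OF norm_triangle_ineq add_mono[OF f2_mismatch_bound[OF w s] jacobian_defect_bound[OF w s]]])
  also have "\<dots> = Hb b / \<omega>" unfolding Hb_def using w \<omega>0_pos by (simp add: field_simps)
  finally show ?thesis .
qed

text \<open>Integrating over [a, b]: the fast acceleration integrates to a boundary term.\<close>
lemma integrated_force_identity:
  assumes wp: "\<omega> > 0" and ab: "0 \<le> a" "a \<le> b"
  shows "integral {a..b} (\<lambda>s. \<omega>\<^sup>2 *\<^sub>R g (yw \<omega> s)) - integral {a..b} F_lim
       = integral {a..b} (force_residual \<omega>) - (yd \<omega> b - yd \<omega> a) v* Ai"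
proof -
  have sub: "{a..b} \<subseteq> {0..}" using ab by auto
  have int1: "(\<lambda>s. \<omega>\<^sup>2 *\<^sub>R g (yw \<omega> s)) integrable_on {a..b}"
  proof (rule integrable_continuous_interval)
    have "continuous_on {a..b} (\<lambda>s. g (yw \<omega> s))"
      by (rule continuous_on_compose2[OF g_cont[of UNIV] continuous_on_subset[OF yw_cont[OF wp] sub]]) auto
    then show "continuous_on {a..b} (\<lambda>s. \<omega>\<^sup>2 *\<^sub>R g (yw \<omega> s))" by (intro continuous_intros)
  qed
  have int2: "F_lim integrable_on {a..b}"
    by (rule integrable_continuous_interval, rule continuous_on_subset[OF F_lim_cont sub])
  have ftc: "(ydd \<omega> has_integral (yd \<omega> b - yd \<omega> a)) {a..b}"
  proof (rule fundamental_theorem_of_calculus[OF ab(2)])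
    fix x assume "x \<in> {a..b}"
    then show "(yd \<omega> has_vector_derivative ydd \<omega> x) (at x within {a..b})"
      using has_vector_derivative_within_subset[OF yd(2)[OF wp] sub] ab by auto
  qed
  have "((\<lambda>s. ydd \<omega> s v* Ai) has_integral ((yd \<omega> b - yd \<omega> a) v* Ai)) {a..b}"
    using has_integral_linear[OF ftc vAi_bl] by (simp add: o_def)
  then have "(force_residual \<omega> has_integral
      (integral {a..b} (\<lambda>s. \<omega>\<^sup>2 *\<^sub>R g (yw \<omega> s)) - integral {a..b} F_lim + (yd \<omega> b - yd \<omega> a) v* Ai)) {a..b}"
    unfolding force_residual_def
    by (intro has_integral_add has_integral_diff integrable_integral int1 int2)
  then show ?thesis by (simp add: integral_unique)
qed

lemma averaged_force_error:
  assumes t: "t \<ge> 0" and T: "T > 0" and w: "\<omega> \<ge> \<omega>0"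
  shows "norm ((1/T) *\<^sub>R integral {t..t+T} (\<lambda>s. \<omega>\<^sup>2 *\<^sub>R g (yw \<omega> s)) - (1/T) *\<^sub>R integral {t..t+T} F_lim)
     \<le> Hb (t+T) / \<omega> + (2 * norm Ai / T) * sqrt (Qb (t+T) / \<omega>)"
proof -
  have wp: "\<omega> > 0" using w \<omega>0_pos by simp
  define \<Delta> where "\<Delta> = (yd \<omega> (t+T) - yd \<omega> t) v* Ai"
  have residual: "norm (integral {t..t+T} (force_residual \<omega>)) \<le> (Hb (t+T) / \<omega>) * T"
    using integral_norm_le_const_bound[of t "t+T" "force_residual \<omega>" "Hb (t+T) / \<omega>"]
      force_residual_bound[OF w] t T by simp
  have boundary: "norm \<Delta> \<le> 2 * sqrt (Qb (t+T) / \<omega>) * norm Ai"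
  proof -
    have "norm \<Delta> \<le> norm (yd \<omega> (t+T) - yd \<omega> t) * norm Ai" unfolding \<Delta>_def by (rule vec_mat_norm)
    also have "\<dots> \<le> (norm (yd \<omega> (t+T)) + norm (yd \<omega> t)) * norm Ai"
      by (intro mult_right_mono norm_triangle_ineq4) simp
    also have "\<dots> \<le> (sqrt (Qb (t+T) / \<omega>) + sqrt (Qb (t+T) / \<omega>)) * norm Ai"
      using yd_small[OF w, of "t+T" "t+T"] yd_small[OF w, of t "t+T"] t T
      by (intro mult_right_mono add_mono) auto
    finally show ?thesis by simp
  qed
  have "(1/T) *\<^sub>R integral {t..t+T} (\<lambda>s. \<omega>\<^sup>2 *\<^sub>R g (yw \<omega> s)) - (1/T) *\<^sub>R integral {t..t+T} F_lim
      = (1/T) *\<^sub>R (integral {t..t+T} (force_residual \<omega>) - \<Delta>)"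
    unfolding \<Delta>_def scaleR_diff_right[symmetric]
    using integrated_force_identity[OF wp t, of "t+T"] T by simp
  also have "norm \<dots> \<le> (1/T) * ((Hb (t+T) / \<omega>) * T + 2 * sqrt (Qb (t+T) / \<omega>) * norm Ai)"
    using T order_trans[OF norm_triangle_ineq4 add_mono[OF residual boundary]]
    by (simp add: divide_right_mono)
  also have "\<dots> = Hb (t+T) / \<omega> + (2 * norm Ai / T) * sqrt (Qb (t+T) / \<omega>)"
    using T by (simp add: field_simps)
  finally show ?thesis .
qed

lemma averaged_force_limit:
  assumes t: "t \<ge> 0" and T: "T > 0"
  shows "((\<lambda>\<omega>. (1/T) *\<^sub>R integral {t..t+T} (\<lambda>s. \<omega>\<^sup>2 *\<^sub>R g (yw \<omega> s))) \<longlongrightarrow> (1/T) *\<^sub>R integral {t..t+T} F_lim) at_top"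
proof -
  have z: "((\<lambda>\<omega>. Hb (t+T) / \<omega> + (2 * norm Ai / T) * sqrt (Qb (t+T) / \<omega>)) \<longlongrightarrow> 0 + (2 * norm Ai / T) * sqrt 0) at_top"
    by (intro tendsto_intros tendsto_const_div_at_top)
  have "((\<lambda>\<omega>. (1/T) *\<^sub>R integral {t..t+T} (\<lambda>s. \<omega>\<^sup>2 *\<^sub>R g (yw \<omega> s)) - (1/T) *\<^sub>R integral {t..t+T} F_lim) \<longlongrightarrow> 0) at_top"
  proof (rule Lim_null_comparison)
    show "\<forall>\<^sub>F \<omega> in at_top. norm ((1/T) *\<^sub>R integral {t..t+T} (\<lambda>s. \<omega>\<^sup>2 *\<^sub>R g (yw \<omega> s)) - (1/T) *\<^sub>R integral {t..t+T} F_lim)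
        \<le> Hb (t+T) / \<omega> + (2 * norm Ai / T) * sqrt (Qb (t+T) / \<omega>)"
      using eventually_ge_at_top[of \<omega>0] by (rule eventually_mono) (rule averaged_force_error[OF t T])
    show "((\<lambda>\<omega>. Hb (t+T) / \<omega> + (2 * norm Ai / T) * sqrt (Qb (t+T) / \<omega>)) \<longlongrightarrow> 0) at_top"
      using z by simp
  qed
  then show ?thesis by (rule LIM_zero_cancel)
qed

definition "lam t = - F_lim t"

lemma iter_lim_lam:
  assumes t: "t \<ge> 0"
  shows "iter_lim (\<lambda>\<omega> T. (1 / T) *\<^sub>R integral {t..t+T} (\<lambda>s. \<omega>\<^sup>2 *\<^sub>R g (yw \<omega> s))) (- lam t)"
  unfolding iter_lim_def lam_def minus_minus
proof (intro exI conjI)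
  show "\<forall>\<^sub>F T in at_right 0. ((\<lambda>\<omega>. (1/T) *\<^sub>R integral {t..t+T} (\<lambda>s. \<omega>\<^sup>2 *\<^sub>R g (yw \<omega> s)))
      \<longlongrightarrow> (1/T) *\<^sub>R integral {t..t+T} F_lim) at_top"
    using eventually_at_right_less[of "0::real"] by (rule eventually_mono) (rule averaged_force_limit[OF t])
  show "((\<lambda>T. (1/T) *\<^sub>R integral {t..t+T} F_lim) \<longlongrightarrow> F_lim t) (at_right 0)" by (rule average_tendsto[OF F_lim_cont t])
qed

lemma lam_A: "f2 (x_lim t, y0) + lam t v* A = 0"
  unfolding lam_def F_lim_def by (simp add: neg_vm vA_Ai)

lemma lam_cont: "continuous_on {0..} lam"
  unfolding lam_def by (intro continuous_intros F_lim_cont)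

lemma limit_system_solution:
  "solves2 x_lim (\<lambda>t. f1 (x_lim t, (\<lambda>_. y0) t)) x0 x1"
  "solves2 (\<lambda>_. y0) (\<lambda>t. f2 (x_lim t, (\<lambda>_. y0) t) + lam t v* Dg ((\<lambda>_. y0) t)) y0 y1"
proof -
  show "solves2 x_lim (\<lambda>t. f1 (x_lim t, (\<lambda>_. y0) t)) x0 x1"
    unfolding solves2_def using x_lim_deriv x_lim_init by (intro exI[of _ xd_lim]) auto
  have "((\<lambda>_. 0) has_vector_derivative (f2 (x_lim t, y0) + lam t v* Dg y0)) (at t within {0..})" for t
    using lam_A[of t] unfolding A_def by (simp add: has_vector_derivative_const)
  then show "solves2 (\<lambda>_. y0) (\<lambda>t. f2 (x_lim t, (\<lambda>_. y0) t) + lam t v* Dg ((\<lambda>_. y0) t)) y0 y1"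
    unfolding solves2_def using y1_0
    by (intro exI[of _ "\<lambda>_. 0"]) (auto intro: has_vector_derivative_const)
qed

lemma multiplier_force_bound:
  "norm (f2 (x, y) + lam s v* Dg y)
     \<le> L2 * (norm (x - x_lim s) + norm (y - y0)) + (norm (lam s) * LD) * norm (y - y0)"
proof -
  have "f2 (x, y) + lam s v* Dg y = (f2 (x, y) - f2 (x_lim s, y0)) + lam s v* (Dg y - A)"
    using lam_A[of s] by (simp add: vector_matrix_mult_diff_rdistrib algebra_simps)
  also have "norm \<dots> \<le> norm (f2 (x, y) - f2 (x_lim s, y0)) + norm (lam s v* (Dg y - A))"
    by (rule norm_triangle_ineq)
  also have "\<dots> \<le> L2 * (norm (x - x_lim s) + norm (y - y0)) + (norm (lam s) * LD) * norm (y - y0)"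
  proof (rule add_mono)
    show "norm (f2 (x, y) - f2 (x_lim s, y0)) \<le> L2 * (norm (x - x_lim s) + norm (y - y0))"
      by (rule pair_lip2)
    have "norm (lam s v* (Dg y - A)) \<le> norm (lam s) * norm (Dg y - A)" by (rule vec_mat_norm)
    also have "\<dots> \<le> norm (lam s) * (LD * norm (y - y0))"
      unfolding A_def by (intro mult_left_mono LD(2)) simp
    finally show "norm (lam s v* (Dg y - A)) \<le> (norm (lam s) * LD) * norm (y - y0)"
      by (simp add: mult.assoc)
  qed
  finally show ?thesis .
qed

text \<open>Uniqueness: any solution of the limit system is (x_lim, y0), by a Gronwall argument
  for its phase-space deviation from that solution.\<close>
lemma limit_system_unique:
  assumes sx: "solves2 x (\<lambda>t. f1 (x t, y t)) x0 x1"
    and sy: "solves2 y (\<lambda>t. f2 (x t, y t) + lam t v* Dg (y t)) y0 y1"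
    and T: "T \<ge> 0"
  shows "x T = x_lim T \<and> y T = y0"
proof -
  obtain x' where x': "\<And>t. t \<ge> 0 \<Longrightarrow> (x has_vector_derivative x' t) (at t within {0..})"
    "\<And>t. t \<ge> 0 \<Longrightarrow> (x' has_vector_derivative f1 (x t, y t)) (at t within {0..})" "x 0 = x0" "x' 0 = x1"
    using sx unfolding solves2_def by blast
  obtain y' where y': "\<And>t. t \<ge> 0 \<Longrightarrow> (y has_vector_derivative y' t) (at t within {0..})"
    "\<And>t. t \<ge> 0 \<Longrightarrow> (y' has_vector_derivative (f2 (x t, y t) + lam t v* Dg (y t))) (at t within {0..})"
    "y 0 = y0" "y' 0 = y1"
    using sy unfolding solves2_def by blast
  have "bounded (lam ` {0..T})"
    by (intro compact_imp_bounded compact_continuous_image continuous_on_subset[OF lam_cont]) auto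
  then obtain \<Lambda> where \<Lambda>: "\<And>s. s \<in> {0..T} \<Longrightarrow> norm (lam s) \<le> \<Lambda>" "\<Lambda> \<ge> 0"
    unfolding bounded_pos by (metis image_eqI less_imp_le)
  define dx where "dx s = x s - x_lim s" for s
  define dv where "dv s = x' s - xd_lim s" for s
  define dy where "dy s = y s - y0" for s
  define e1 where "e1 s = f1 (x s, y s) - f1 (x_lim s, y0)" for s
  define e2 where "e2 s = f2 (x s, y s) + lam s v* Dg (y s)" for s
  define K where "K = 2 + 2 * L1 + 2 * L2 + \<Lambda> * LD"
  define u where "u s = ((dx s, dv s), (dy s, y' s))" for s
  have der: "(u has_vector_derivative ((dv s, e1 s), (y' s, e2 s))) (at s within {0..T})"
    if s: "s \<in> {0..T}" for s
  proof -
    have s0: "s \<ge> 0" using s by simp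
    have "(dx has_vector_derivative dv s) (at s within {0..})"
      unfolding dx_def dv_def by (intro has_vector_derivative_diff x'(1)[OF s0] x_lim_deriv(2)[OF s0])
    moreover have "(dv has_vector_derivative e1 s) (at s within {0..})"
      unfolding dv_def e1_def by (intro has_vector_derivative_diff x'(2)[OF s0] x_lim_deriv(1)[OF s0])
    moreover have "(dy has_vector_derivative y' s) (at s within {0..})"
      unfolding dy_def using has_vector_derivative_diff[OF y'(1)[OF s0] has_vector_derivative_const[of y0]] by simp
    moreover have "(y' has_vector_derivative e2 s) (at s within {0..})"
      unfolding e2_def by (rule y'(2)[OF s0])
    ultimately have "(u has_vector_derivative ((dv s, e1 s), (y' s, e2 s))) (at s within {0..})"
      unfolding u_def by (intro has_vector_derivative_Pair)
    then show ?thesis by (rule has_vector_derivative_within_subset) auto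
  qed
  have growth: "u s \<bullet> ((dv s, e1 s), (y' s, e2 s)) \<le> (K / 2) * (u s \<bullet> u s)" if s: "s \<in> {0..T}" for s
  proof -
    have "norm (e2 s) \<le> L2 * (norm (dx s) + norm (dy s)) + (norm (lam s) * LD) * norm (dy s)"
      unfolding e2_def dx_def dy_def by (rule multiplier_force_bound)
    also have "\<dots> \<le> L2 * (norm (dx s) + norm (dy s)) + (\<Lambda> * LD) * norm (dy s)"
      using \<Lambda>(1)[OF s] LD(1) by (intro add_left_mono mult_right_mono) auto
    finally show ?thesis unfolding u_def K_def
      using L1(1) L2(1) LD(1) \<Lambda>(2) e1_def dx_def dy_def pair_lip1
      by (intro phase_space_growth) auto
  qed
  have "u 0 = 0"
    unfolding u_def dx_def dv_def dy_def using x'(3,4) y'(3,4) x_lim_init y1_0 by (simp add: zero_prod_def)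
  then have "u T = 0"
    using L1(1) L2(1) LD(1) \<Lambda>(2) by (intro deviation_vanishes[OF T der growth]) (auto simp: K_def)
  then show ?thesis unfolding u_def dx_def dy_def by (simp add: zero_prod_def)
qed

lemma xw_tendsto_limit_solution:
  assumes sx: "solves2 x (\<lambda>t. f1 (x t, y t)) x0 x1"
    and sy: "solves2 y (\<lambda>t. f2 (x t, y t) + lam t v* Dg (y t)) y0 y1"
    and t: "t \<ge> 0"
  shows "((\<lambda>\<omega>. xw \<omega> t) \<longlongrightarrow> x t) at_top"
proof -
  have "((\<lambda>\<omega>. xw \<omega> t - x_lim t) \<longlongrightarrow> 0) at_top"
  proof (rule Lim_null_comparison)
    show "\<forall>\<^sub>F \<omega> in at_top. norm (xw \<omega> t - x_lim t) \<le> Wt t / \<omega>"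
      using eventually_ge_at_top[of \<omega>0] by (rule eventually_mono) (rule xw_near_x_lim(1)[OF t])
  qed (rule tendsto_const_div_at_top)
  then show ?thesis using limit_system_unique[OF sx sy t] LIM_zero_cancel by simp
qed

lemma g_yw_tendsto_0:
  assumes t: "t \<ge> 0"
  shows "((\<lambda>\<omega>. g (yw \<omega> t)) \<longlongrightarrow> 0) at_top"
proof (rule Lim_null_comparison)
  show "\<forall>\<^sub>F \<omega> in at_top. norm (g (yw \<omega> t)) \<le> sqrt K2 / \<omega>"
    using eventually_ge_at_top[of 1] by (rule eventually_mono) (rule g_bound[OF _ t], simp)
qed (rule tendsto_const_div_at_top)

lemma yw_two_scale_limit_solution:
  assumes sx: "solves2 x (\<lambda>t. f1 (x t, y t)) x0 x1"
    and sy: "solves2 y (\<lambda>t. f2 (x t, y t) + lam t v* Dg (y t)) y0 y1"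
  shows "two_scale_flow_conv yw y"
proof (rule two_scale_of_uniform_rate)
  fix \<omega> s :: real assume "\<omega> \<ge> \<omega>0" "s \<ge> 0"
  then show "norm (yw \<omega> s - y s) \<le> R / \<omega>"
    using y_near_y0 limit_system_unique[OF sx sy] by simp
qed

end

theorem lemma3p2:
  fixes U :: "(real^('p::finite)) \<times> (real^('m::finite)) \<Rightarrow> real"
    and f1 :: "(real^'p) \<times> (real^'m) \<Rightarrow> real^'p"
    and f2 :: "(real^'p) \<times> (real^'m) \<Rightarrow> real^'m"
    and g :: "real^'m \<Rightarrow> real^'m"
    and Dg :: "real^'m \<Rightarrow> real^'m^'m"
    and xw :: "real \<Rightarrow> real \<Rightarrow> real^'p"
    and yw :: "real \<Rightarrow> real \<Rightarrow> real^'m"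
    and x0 x1 :: "real^'p" and y0 y1 :: "real^'m"
  assumes U_grad: "\<And>x y. (U has_derivative (\<lambda>(h, k). - (f1 (x, y) \<bullet> h) - (f2 (x, y) \<bullet> k))) (at (x, y))"
    and g_deriv: "\<And>y. (g has_derivative (\<lambda>h. Dg y *v h)) (at y)"
    and f1_C1: "C1_bdd_deriv f1"
    and f2_C1: "C1_bdd_deriv f2"
    and Dg_C1: "C1_bdd_deriv Dg"
    and sol: "\<And>\<omega>. \<omega> > 0 \<Longrightarrow>
               solves2 (xw \<omega>) (\<lambda>t. f1 (xw \<omega> t, yw \<omega> t)) x0 x1 \<and>
               solves2 (yw \<omega>) (\<lambda>t. f2 (xw \<omega> t, yw \<omega> t) - \<omega>\<^sup>2 *\<^sub>R (g (yw \<omega> t) v* Dg (yw \<omega> t))) y0 y1"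
    and g_y0: "g y0 = 0"
    and Dg_y1: "Dg y0 *v y1 = 0"
    and bdd: "\<exists>B. \<forall>\<omega>>0. \<forall>t\<ge>0. norm (xw \<omega> t) \<le> B \<and> norm (yw \<omega> t) \<le> B"
    and nonsing: "\<exists>\<epsilon>>0. \<forall>y\<in>ball y0 \<epsilon>. invertible (Dg y)"
  shows "\<exists>lam :: real \<Rightarrow> real^'m.
           (\<forall>t\<ge>0. iter_lim (\<lambda>\<omega> T. (1 / T) *\<^sub>R integral {t..t+T} (\<lambda>s. \<omega>\<^sup>2 *\<^sub>R g (yw \<omega> s))) (- lam t))
         \<and> (\<exists>x y. solves2 x (\<lambda>t. f1 (x t, y t)) x0 x1 \<and>
                  solves2 y (\<lambda>t. f2 (x t, y t) + lam t v* Dg (y t)) y0 y1)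
         \<and> (\<forall>x y. solves2 x (\<lambda>t. f1 (x t, y t)) x0 x1 \<and>
                  solves2 y (\<lambda>t. f2 (x t, y t) + lam t v* Dg (y t)) y0 y1 \<longrightarrow>
                  (\<forall>t\<ge>0. ((\<lambda>\<omega>. xw \<omega> t) \<longlongrightarrow> x t) at_top)
                \<and> two_scale_flow_conv yw y
                \<and> (\<forall>t\<ge>0. ((\<lambda>\<omega>. g (yw \<omega> t)) \<longlongrightarrow> 0) at_top))"
proof -
  interpret S: penalized_system U f1 f2 g Dg xw yw x0 x1 y0 y1
    using assms by (simp add: penalized_system_def)
  show ?thesis
  proof (intro exI[of _ S.lam] conjI allI impI)
    show "iter_lim (\<lambda>\<omega> T. (1 / T) *\<^sub>R integral {t..t+T} (\<lambda>s. \<omega>\<^sup>2 *\<^sub>R g (yw \<omega> s))) (- S.lam t)"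
      if "t \<ge> 0" for t using S.iter_lim_lam[OF that] .
    show "\<exists>x y. solves2 x (\<lambda>t. f1 (x t, y t)) x0 x1 \<and>
                  solves2 y (\<lambda>t. f2 (x t, y t) + S.lam t v* Dg (y t)) y0 y1"
      by (intro exI[of _ S.x_lim] exI[of _ "\<lambda>_. y0"] conjI S.limit_system_solution)
  qed (use S.xw_tendsto_limit_solution S.yw_two_scale_limit_solution S.g_yw_tendsto_0 in blast)+
qed

end
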